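(* Let $L=\bigsqcup_{n\ge0}L_n$, $p^\downarrow$, a coherent system $\{M_n\}$ with $M_n(\lambda)>0$ for all $\lambda\in L_n$, and the Markov operators $T_n$ on $C(L_n)$ be as described in the context. Let $\bar L$ be a topological space and $\iota_n:L_n\to\bar L$ injective maps, and assume: (A1) $\bar L$ is compact, metrizable and separable; (A2) every nonempty open subset of $\bar L$ meets $\iota_n(L_n)$ for all sufficiently large $n$; (A3) there is a dense linear subspace $\mathcal F\subset C(\bar L)$ and an ascending sequence $\mathcal F^1\subset\mathcal F^2\subset\cdots$ of finite-dimensional subspaces with $\bigcup_m\mathcal F^m=\mathcal F$ such that for each $m$, for all sufficiently large $n$, $\pi_n$ is injective on $\mathcal F^m$ and $T_n(\pi_n(\mathcal F^m))\subseteq\pi_n(\mathcal F^m)$; (A4) there are numbers $\varepsilon_n>0$ with $\varepsilon_n\to0$ such that for every $m$ and every $f\in\mathcal F^m$, the (for large $n$ uniquely defined) elements $g_n\in\mathcal F^m$ with $\pi_n(g_n)=\varepsilon_n^{-1}(T_n-\mathbf 1)\pi_n(f)$ converge in the finite-dimensional space $\mathcal F^m$ to a limit, denoted $Af$ (this defines a linear operator $A:\mathcal F\to\mathcal F$ preserving each $\mathcal F^m$); (A5) the constant function $1$ belongs to $\mathcal F$. Then: (1) the operator $A:\mathcal F\to\mathcal F$ is closable in the Banach space $C(\bar L)$; (2) its closure $\bar A$ generates a conservative Markov semigroup $\{T(t)\}_{t\ge0}$ in $C(\bar L)$; (3) for every $f\in C(\bar L)$ and $t\ge0$, $\|T_n^{[\varepsilon_n^{-1}t]}\pi_n(f)-\pi_n(T(t)f)\|_n\to0$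 as $n\to\infty$, uniformly in $t$ on bounded intervals.
   Context: Setting: $L=\bigsqcup_{n\ge0}L_n$ is a graded set with $L_0$ a singleton and each $L_n$ finite; $p^\downarrow:L\times L\to[0,\infty)$ vanishes unless $|\lambda|=|\mu|+1$ and satisfies $\sum_{\mu\in L_{|\lambda|-1}}p^\downarrow(\lambda,\mu)=1$ for $|\lambda|\ge1$. A coherent system is a sequence of probability measures $M_n$ on $L_n$ with $\sum_{\lambda\in L_n}M_n(\lambda)p^\downarrow(\lambda,\mu)=M_{n-1}(\mu)$. With $M_n>0$ everywhere, $p^\uparrow(\lambda,\nu)=\frac{M_{n+1}(\nu)}{M_n(\lambda)}p^\downarrow(\nu,\lambda)$ for $\lambda\in L_n,\nu\in L_{n+1}$, and $T_n$ acts on real functions $g$ on $L_n$ by $(T_ng)(\lambda)=\sum_{\nu\in L_{n+1}}p^\uparrow(\lambda,\nu)\sum_{\tilde\lambda\in L_n}p^\downarrow(\nu,\tilde\lambda)g(\tilde\lambda)$. $C(\bar L)$ is the Banach space of real continuous functions with norm $\|f\|=\sup|f|$; $C(L_n)$ is the space of real functions on $L_n$ with norm $\|g\|_n=\sup_{L_n}|g|$; $\pi_n:C(\bar L)\to C(L_n)$, $(\pi_nf)(\lambda)=f(\iota_n(\lambda))$. $\mathbf 1$ is the identity operator. A conservative Markov semigroup in $C(\bar L)$ is a strongly continuous semigroup of contractions that preserves the cone of nonnegative functions and fixes the constant function $1$. *)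

theory Defs
  imports "HOL-Analysis.Analysis"
begin

text \<open>The graded set L is modelled as a type 'l with a level function lev;
  L_n = level_set lev n.  Functions on L_n are functions 'l => real that vanish
  outside L_n.\<close>

definition level_set :: "('l \<Rightarrow> nat) \<Rightarrow> nat \<Rightarrow> 'l set" where
  "level_set lev n = {x. lev x = n}"

definition graded_down_kernel :: "('l \<Rightarrow> nat) \<Rightarrow> ('l \<Rightarrow> 'l \<Rightarrow> real) \<Rightarrow> bool" where
  "graded_down_kernel lev pd \<longleftrightarrow>
     (\<exists>x0. level_set lev 0 = {x0}) \<and>
     (\<forall>n. finite (level_set lev n)) \<and>
     (\<forall>la mu. pd la mu \<ge> 0) \<and>
     (\<forall>la mu. lev la \<noteq> lev mu + 1 \<longrightarrow> pd la mu = 0) \<and>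
     (\<forall>la. lev la \<ge> 1 \<longrightarrow> (\<Sum>mu\<in>level_set lev (lev la - 1). pd la mu) = 1)"

definition coherent_system :: "('l \<Rightarrow> nat) \<Rightarrow> ('l \<Rightarrow> 'l \<Rightarrow> real) \<Rightarrow> ('l \<Rightarrow> real) \<Rightarrow> bool" where
  "coherent_system lev pd M \<longleftrightarrow>
     (\<forall>la. M la \<ge> 0) \<and>
     (\<forall>n. (\<Sum>la\<in>level_set lev n. M la) = 1) \<and>
     (\<forall>n. \<forall>mu\<in>level_set lev n.
        (\<Sum>la\<in>level_set lev (Suc n). M la * pd la mu) = M mu)"

definition p_up :: "('l \<Rightarrow> 'l \<Rightarrow> real) \<Rightarrow> ('l \<Rightarrow> real) \<Rightarrow> 'l \<Rightarrow> 'l \<Rightarrow> real" where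
  "p_up pd M la nu = M nu / M la * pd nu la"

definition T_op :: "('l \<Rightarrow> nat) \<Rightarrow> ('l \<Rightarrow> 'l \<Rightarrow> real) \<Rightarrow> ('l \<Rightarrow> real) \<Rightarrow> nat
                     \<Rightarrow> ('l \<Rightarrow> real) \<Rightarrow> ('l \<Rightarrow> real)" where
  "T_op lev pd M n g = (\<lambda>la. if lev la = n then
      (\<Sum>nu\<in>level_set lev (Suc n). p_up pd M la nu *
          (\<Sum>la'\<in>level_set lev n. pd nu la' * g la'))
      else 0)"

definition proj :: "('l \<Rightarrow> nat) \<Rightarrow> (nat \<Rightarrow> 'l \<Rightarrow> 'b) \<Rightarrow> nat
                     \<Rightarrow> ('b::topological_space \<Rightarrow>\<^sub>C real) \<Rightarrow> ('l \<Rightarrow> real)" where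
  "proj lev \<iota> n f = (\<lambda>la. if lev la = n then apply_bcontfun f (\<iota> n la) else 0)"

definition conservative_markov_semigroup ::
  "(real \<Rightarrow> ('b::topological_space \<Rightarrow>\<^sub>C real) \<Rightarrow> ('b \<Rightarrow>\<^sub>C real)) \<Rightarrow> bool" where
  "conservative_markov_semigroup S \<longleftrightarrow>
     (\<forall>t\<ge>0. bounded_linear (S t)) \<and>
     (\<forall>f. S 0 f = f) \<and>
     (\<forall>s\<ge>0. \<forall>t\<ge>0. \<forall>f. S (s + t) f = S s (S t f)) \<and>
     (\<forall>f. continuous_on {0..} (\<lambda>t. S t f)) \<and>
     (\<forall>t\<ge>0. \<forall>f. norm (S t f) \<le> norm f) \<and>
     (\<forall>t\<ge>0. \<forall>f. (\<forall>x. apply_bcontfun f x \<ge> 0) \<longrightarrow> (\<forall>x. apply_bcontfun (S t f) x \<ge> 0)) \<and>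
     (\<forall>t\<ge>0. S t (const_bcontfun 1) = const_bcontfun 1)"

definition generator_graph ::
  "(real \<Rightarrow> 'v::real_normed_vector \<Rightarrow> 'v) \<Rightarrow> ('v \<times> 'v) set" where
  "generator_graph S = {(f, g). ((\<lambda>h. (1 / h) *\<^sub>R (S h f - f)) \<longlongrightarrow> g) (at_right 0)}"

definition closable :: "'v::real_normed_vector set \<Rightarrow> ('v \<Rightarrow> 'v) \<Rightarrow> bool" where
  "closable D A \<longleftrightarrow> (\<forall>f g1 g2. (f, g1) \<in> closure {(x, A x) | x. x \<in> D} \<longrightarrow>
                          (f, g2) \<in> closure {(x, A x) | x. x \<in> D} \<longrightarrow> g1 = g2)"

end

theory Submission
  imports Defs
begin

text \<open>
  Since \<open>A\<close> maps each finite-dimensional level \<open>\<F>m m\<close> into itself, it acts there as a bounded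
  operator \<open>Ah\<close>; for large \<open>n\<close> the rescaled generators \<open>(T\<^sub>n - 1)/\<epsilon>\<^sub>n\<close>, read through the
  projection \<open>\<pi>\<^sub>n\<close> (injective on the level), become bounded operators \<open>B\<^sub>n\<close> on the level with
  \<open>B\<^sub>n \<longrightarrow> Ah\<close>.  Then \<open>T\<^sub>n\<^sup>k (\<pi>\<^sub>n f) = \<pi>\<^sub>n ((1 + \<epsilon>\<^sub>n B\<^sub>n)\<^sup>k f)\<close>, and an Euler estimate in the
  Banach algebra of operators gives \<open>(1 + \<epsilon>\<^sub>n B\<^sub>n)\<^bsup>\<lfloor>t/\<epsilon>\<^sub>n\<rfloor>\<^esup> \<longrightarrow> exp (t Ah)\<close> uniformly on
  \<open>[0, R]\<close>.  As the \<open>T\<^sub>n\<close> are positive contractions fixing \<open>1\<close> and the images \<open>\<iota>\<^sub>n(L\<^sub>n)\<close>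
  become dense, \<open>exp (t A)\<close> is a positive contraction of \<open>\<F>\<close> fixing \<open>1\<close>, and it extends by
  continuity to a conservative Markov semigroup \<open>S\<close>.  Finally \<open>\<F>\<close> is a core: on \<open>\<F>\<close>,
  \<open>A (\<integral>\<^sub>0\<^sup>t S s f ds) = S t f - f\<close>, which identifies the generator of \<open>S\<close> with the closure of \<open>A\<close>.
\<close>

section \<open>The Banach algebra of bounded operators on \<open>C(X)\<close>\<close>

instance bcontfun :: (topological_space, complete_space) complete_space
proof
  fix f :: "nat \<Rightarrow> ('a, 'b) bcontfun"
  assume "Cauchy f"
  then obtain g where "uniform_limit UNIV f g sequentially"
    using uniformly_convergent_eq_cauchy[of "\<lambda>_. True" f]
    unfolding Cauchy_def uniform_limit_sequentially_iff
    by (metis dist_fun_lt_imp_dist_val_lt)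
  from uniform_limit_bcontfunE[OF this sequentially_bot]
  obtain l' where "g = apply_bcontfun l'" "(f \<longlonglongrightarrow> l')" by metis
  then show "convergent f"
    by (intro convergentI)
qed

instance bcontfun :: (topological_space, banach) banach ..

text \<open>A type copy of the endomorphisms, so that composition can be the multiplication of a
  Banach algebra and the exponential series of the library applies.\<close>

typedef (overloaded) 'b endo =
  "UNIV :: (('b::topological_space \<Rightarrow>\<^sub>C real) \<Rightarrow>\<^sub>L ('b \<Rightarrow>\<^sub>C real)) set"
  morphisms endo_blinfun Endo by auto

setup_lifting type_definition_endo

instantiation endo :: (topological_space) real_vector
begin
lift_definition zero_endo :: "'a endo" is 0 .
lift_definition plus_endo :: "'a endo \<Rightarrow> 'a endo \<Rightarrow> 'a endo" is "(+)" .
lift_definition minus_endo :: "'a endo \<Rightarrow> 'a endo \<Rightarrow> 'a endo" is "(-)" .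
lift_definition uminus_endo :: "'a endo \<Rightarrow> 'a endo" is "uminus" .
lift_definition scaleR_endo :: "real \<Rightarrow> 'a endo \<Rightarrow> 'a endo" is "scaleR" .
instance
proof
  fix a b :: real and x y z :: "'a endo"
  show "x + y + z = x + (y + z)" by transfer simp
  show "x + y = y + x" by transfer simp
  show "0 + x = x" by transfer simp
  show "- x + x = 0" by transfer simp
  show "x - y = x + - y" by transfer simp
  show "a *\<^sub>R (x + y) = a *\<^sub>R x + a *\<^sub>R y" by transfer (simp add: scaleR_add_right)
  show "(a + b) *\<^sub>R x = a *\<^sub>R x + b *\<^sub>R x" by transfer (simp add: scaleR_add_left)
  show "a *\<^sub>R b *\<^sub>R x = (a * b) *\<^sub>R x" by transfer simp
  show "1 *\<^sub>R x = x" by transfer simp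
qed
end

instantiation endo :: (topological_space) real_normed_vector
begin
lift_definition norm_endo :: "'a endo \<Rightarrow> real" is norm .
definition dist_endo :: "'a endo \<Rightarrow> 'a endo \<Rightarrow> real" where "dist_endo x y = norm (x - y)"
definition sgn_endo :: "'a endo \<Rightarrow> 'a endo" where "sgn_endo x = x /\<^sub>R norm x"
definition uniformity_endo :: "('a endo \<times> 'a endo) filter"
  where "uniformity_endo = (INF e\<in>{0 <..}. principal {(x, y). dist x y < e})"
definition open_endo :: "('a endo) set \<Rightarrow> bool"
  where "open_endo S = (\<forall>x\<in>S. \<forall>\<^sub>F (x', y) in uniformity. x' = x \<longrightarrow> y \<in> S)"
instance
proof
  fix a :: real and x y :: "'a endo"
  show "dist x y = norm (x - y)" by (simp add: dist_endo_def)
  show "sgn x = x /\<^sub>R norm x" by (simp add: sgn_endo_def)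
  show "uniformity = (INF e\<in>{0<..}. principal {(x, y::'a endo). dist x y < e})"
    by (simp add: uniformity_endo_def)
  show "open U = (\<forall>x\<in>U. \<forall>\<^sub>F (x', y) in uniformity. x' = x \<longrightarrow> y \<in> U)" for U :: "'a endo set"
    by (simp add: open_endo_def)
  show "(norm x = 0) = (x = 0)" by transfer simp
  show "norm (x + y) \<le> norm x + norm y" by transfer (rule norm_triangle_ineq)
  show "norm (a *\<^sub>R x) = \<bar>a\<bar> * norm x" by transfer simp
qed
end

lemma const_bcontfun_one_neq_zero: "(const_bcontfun 1 :: 'a::topological_space \<Rightarrow>\<^sub>C real) \<noteq> 0"
proof
  assume "(const_bcontfun 1 :: 'a \<Rightarrow>\<^sub>C real) = 0"
  then have "apply_bcontfun (const_bcontfun 1 :: 'a \<Rightarrow>\<^sub>C real) undefined = apply_bcontfun 0 undefined"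
    by simp
  then show False by simp
qed

lemma norm_id_blinfun_bcontfun: "norm (id_blinfun :: ('a::topological_space \<Rightarrow>\<^sub>C real) \<Rightarrow>\<^sub>L _) = 1"
proof (rule antisym)
  let ?one = "const_bcontfun 1 :: 'a \<Rightarrow>\<^sub>C real"
  show "norm (id_blinfun :: ('a \<Rightarrow>\<^sub>C real) \<Rightarrow>\<^sub>L _) \<le> 1" by (rule norm_blinfun_id_le)
  have "norm ?one \<le> norm (id_blinfun :: ('a \<Rightarrow>\<^sub>C real) \<Rightarrow>\<^sub>L _) * norm ?one"
    using norm_blinfun[of id_blinfun ?one] by simp
  moreover have "norm ?one > 0" using const_bcontfun_one_neq_zero by simp
  ultimately show "1 \<le> norm (id_blinfun :: ('a \<Rightarrow>\<^sub>C real) \<Rightarrow>\<^sub>L _)" by simp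
qed

instantiation endo :: (topological_space) real_normed_algebra_1
begin
lift_definition one_endo :: "'a endo" is id_blinfun .
lift_definition times_endo :: "'a endo \<Rightarrow> 'a endo \<Rightarrow> 'a endo" is "(o\<^sub>L)" .
instance
proof
  fix a :: real and x y z :: "'a endo"
  show "x * y * z = x * (y * z)" by transfer (rule blinfun_eqI, simp)
  show "(x + y) * z = x * z + y * z" by transfer (rule blinfun_eqI, simp add: blinfun.add_left)
  show "x * (y + z) = x * y + x * z"
    by transfer (rule blinfun_eqI, simp add: blinfun.add_right blinfun.add_left)
  show "a *\<^sub>R x * y = a *\<^sub>R (x * y)" by transfer (rule blinfun_eqI, simp add: blinfun.scaleR_left)
  show "x * a *\<^sub>R y = a *\<^sub>R (x * y)"
    by transfer (rule blinfun_eqI, simp add: blinfun.scaleR_right blinfun.scaleR_left)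
  show "1 * x = x" by transfer (rule blinfun_eqI, simp)
  show "x * 1 = x" by transfer (rule blinfun_eqI, simp)
  show "(0::'a endo) \<noteq> 1"
  proof transfer
    have "blinfun_apply (id_blinfun :: ('a \<Rightarrow>\<^sub>C real) \<Rightarrow>\<^sub>L _) (const_bcontfun 1) \<noteq> 0"
      using const_bcontfun_one_neq_zero by simp
    then show "(0 :: ('a \<Rightarrow>\<^sub>C real) \<Rightarrow>\<^sub>L _) \<noteq> id_blinfun"
      by (metis blinfun.zero_left)
  qed
  show "norm (x * y) \<le> norm x * norm y" by transfer (rule norm_blinfun_compose)
  show "norm (1::'a endo) = 1" by transfer (rule norm_id_blinfun_bcontfun)
qed
end

instance endo :: (topological_space) banach
proof
  fix X :: "nat \<Rightarrow> 'a endo"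
  assume "Cauchy X"
  have isometry: "dist (endo_blinfun x) (endo_blinfun y) = dist x y" for x y :: "'a endo"
    unfolding dist_norm by transfer simp
  have "Cauchy (\<lambda>n. endo_blinfun (X n))"
    using \<open>Cauchy X\<close> unfolding Cauchy_def isometry .
  then obtain L where "(\<lambda>n. endo_blinfun (X n)) \<longlonglongrightarrow> L"
    using Cauchy_convergent convergent_def by blast
  then have "X \<longlonglongrightarrow> Endo L"
    by (simp add: tendsto_iff Endo_inverse flip: isometry)
  then show "convergent X" unfolding convergent_def by blast
qed

definition endo_apply :: "'b::topological_space endo \<Rightarrow> ('b \<Rightarrow>\<^sub>C real) \<Rightarrow> ('b \<Rightarrow>\<^sub>C real)" where
  "endo_apply x = blinfun_apply (endo_blinfun x)"

definition endo_of :: "(('b::topological_space \<Rightarrow>\<^sub>C real) \<Rightarrow> ('b \<Rightarrow>\<^sub>C real)) \<Rightarrow> 'b endo" where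
  "endo_of f = Endo (Blinfun f)"

lemma endo_apply_endo_of: "bounded_linear f \<Longrightarrow> endo_apply (endo_of f) = f"
  unfolding endo_apply_def endo_of_def by (simp add: Endo_inverse bounded_linear_Blinfun_apply)

lemma endo_apply_times: "endo_apply (x * y) v = endo_apply x (endo_apply y v)"
  unfolding endo_apply_def by transfer simp

lemma endo_apply_one [simp]: "endo_apply 1 v = v"
  unfolding endo_apply_def by transfer simp

lemma endo_apply_add: "endo_apply (x + y) v = endo_apply x v + endo_apply y v"
  unfolding endo_apply_def by transfer (simp add: blinfun.add_left)

lemma endo_apply_diff: "endo_apply (x - y) v = endo_apply x v - endo_apply y v"
  unfolding endo_apply_def by transfer (simp add: blinfun.diff_left)

lemma endo_apply_scaleR: "endo_apply (a *\<^sub>R x) v = a *\<^sub>R endo_apply x v"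
  unfolding endo_apply_def by transfer (simp add: blinfun.scaleR_left)

lemma norm_endo_apply_le: "norm (endo_apply x v) \<le> norm x * norm v"
  unfolding endo_apply_def by transfer (rule norm_blinfun)

lemma norm_endo_le: "0 \<le> b \<Longrightarrow> (\<And>v. norm (endo_apply x v) \<le> b * norm v) \<Longrightarrow> norm x \<le> b"
  unfolding endo_apply_def by transfer (rule norm_blinfun_bound)

lemma bounded_linear_endo_apply: "bounded_linear (endo_apply x)"
  unfolding endo_apply_def by (rule blinfun.bounded_linear_right)

lemma bounded_linear_endo_apply_left: "bounded_linear (\<lambda>x. endo_apply x v)"
  by (rule bounded_linear_intro[where K = "norm v"])
    (auto simp: endo_apply_add endo_apply_scaleR norm_endo_apply_le)

lemmas endo_apply_add_right = linear_add[OF bounded_linear.linear[OF bounded_linear_endo_apply]]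
lemmas endo_apply_scaleR_right = linear_scale[OF bounded_linear.linear[OF bounded_linear_endo_apply]]

section \<open>Euler approximation of the exponential in a Banach algebra\<close>

lemma norm_exp_minus_one_minus_le:
  fixes W :: "'a::{real_normed_algebra_1,banach}"
  shows "norm (exp W - 1 - W) \<le> norm W ^ 2 * exp (norm W)"
proof -
  have tail: "(\<lambda>i. W ^ (i+2) /\<^sub>R fact (i+2)) sums (exp W - 1 - W)"
    using sums_split_initial_segment[OF exp_converges[of W], of 2]
    by (simp add: eval_nat_numeral algebra_simps)
  have term_le: "norm (W ^ (i+2) /\<^sub>R fact (i+2)) \<le> norm W ^ 2 * (norm W ^ i / fact i)" for i
  proof -
    have "norm (W ^ (i+2) /\<^sub>R fact (i+2)) = norm (W ^ (i+2)) / fact (i+2)"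
      by (simp add: divide_inverse_commute)
    also have "\<dots> \<le> norm W ^ (i+2) / fact (i+2)"
      by (intro divide_right_mono norm_power_ineq) simp
    also have "\<dots> \<le> norm W ^ (i+2) / fact i"
      by (intro divide_left_mono fact_mono) (auto simp del: fact_Suc)
    also have "\<dots> = norm W ^ 2 * (norm W ^ i / fact i)" by (simp add: power_add power2_eq_square)
    finally show ?thesis .
  qed
  have "(\<lambda>i. norm W ^ i / fact i) sums exp (norm W)"
    using exp_converges[of "norm W"] by (simp add: divide_inverse mult.commute)
  then have majorant: "(\<lambda>i. norm W ^ 2 * (norm W ^ i / fact i)) sums (norm W ^ 2 * exp (norm W))"
    by (rule sums_mult)
  have "norm (exp W - 1 - W) = norm (\<Sum>i. W ^ (i+2) /\<^sub>R fact (i+2))"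
    using sums_unique[OF tail] by simp
  also have "\<dots> \<le> (\<Sum>i. norm W ^ 2 * (norm W ^ i / fact i))"
    using majorant by (intro norm_suminf_le[OF term_le]) (simp add: sums_iff)
  also have "\<dots> = norm W ^ 2 * exp (norm W)"
    using majorant by (simp add: sums_iff)
  finally show ?thesis .
qed

lemma norm_power_Suc_diff_le:
  fixes X Y :: "'a::real_normed_algebra_1"
  assumes "norm X \<le> M" "norm Y \<le> M"
  shows "norm (X ^ Suc k - Y ^ Suc k) \<le> real (Suc k) * M ^ k * norm (X - Y)"
proof (induction k)
  case 0 then show ?case by simp
next
  case (Suc k)
  have M: "0 \<le> M" using assms(1) norm_ge_zero order_trans by blast
  have "X ^ Suc (Suc k) - Y ^ Suc (Suc k) = X * (X ^ Suc k - Y ^ Suc k) + (X - Y) * Y ^ Suc k"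
    by (simp add: algebra_simps power_commutes)
  then have "norm (X ^ Suc (Suc k) - Y ^ Suc (Suc k))
      \<le> norm X * norm (X ^ Suc k - Y ^ Suc k) + norm (X - Y) * norm (Y ^ Suc k)"
    by (metis add_mono norm_mult_ineq norm_triangle_le)
  also have "\<dots> \<le> M * (real (Suc k) * M ^ k * norm (X - Y)) + norm (X - Y) * M ^ Suc k"
  proof (intro add_mono mult_mono)
    show "norm (Y ^ Suc k) \<le> M ^ Suc k"
      by (rule order_trans[OF norm_power_ineq]) (intro power_mono assms(2) norm_ge_zero)
  qed (use Suc.IH assms M in auto)
  also have "\<dots> = real (Suc (Suc k)) * M ^ Suc k * norm (X - Y)"
    by (simp add: algebra_simps)
  finally show ?case .
qed

lemma norm_power_diff_le:
  fixes X Y :: "'a::real_normed_algebra_1"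
  assumes "norm X \<le> M" "norm Y \<le> M" "1 \<le> M"
  shows "norm (X ^ k - Y ^ k) \<le> real k * M ^ k * norm (X - Y)"
proof (cases k)
  case (Suc j)
  have "norm (X ^ k - Y ^ k) \<le> real k * M ^ j * norm (X - Y)"
    using norm_power_Suc_diff_le[OF assms(1,2), of j] Suc by simp
  also have "\<dots> \<le> real k * M ^ k * norm (X - Y)"
    using Suc assms(3) by (intro mult_right_mono mult_left_mono power_increasing) auto
  finally show ?thesis .
qed simp

lemma exp_scaleR_add_left:
  fixes Z :: "'a::{real_normed_algebra_1,banach}"
  shows "exp ((a + b) *\<^sub>R Z) = exp (a *\<^sub>R Z) * exp (b *\<^sub>R Z)"
  using exp_add_commuting[of "a *\<^sub>R Z" "b *\<^sub>R Z"] by (simp add: scaleR_add_left)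

lemma exp_scaleR_power:
  fixes Z :: "'a::{real_normed_algebra_1,banach}"
  shows "exp (c *\<^sub>R Z) ^ k = exp ((real k * c) *\<^sub>R Z)"
  by (induction k) (simp_all add: exp_scaleR_add_left[symmetric] algebra_simps)

lemma nat_floor_divide_bounds:
  assumes "0 \<le> t" "0 < e"
  shows "real (nat \<lfloor>t / e\<rfloor>) * e \<le> t" "t - real (nat \<lfloor>t / e\<rfloor>) * e < e"
proof -
  have "of_int \<lfloor>t / e\<rfloor> * e \<le> t"
    using of_int_floor_le[of "t / e"] pos_le_divide_eq[OF assms(2)] by blast
  moreover have "t < (of_int \<lfloor>t / e\<rfloor> + 1) * e"
    using real_of_int_floor_add_one_gt[of "t / e"] pos_divide_less_eq[OF assms(2)] by blast
  ultimately show "real (nat \<lfloor>t / e\<rfloor>) * e \<le> t" "t - real (nat \<lfloor>t / e\<rfloor>) * e < e"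
    using assms by (simp_all add: algebra_simps)
qed

lemma norm_exp_scaleR_minus_one_minus_le:
  fixes Z :: "'a::{real_normed_algebra_1,banach}"
  assumes "0 \<le> h" "h \<le> 1" "norm Z \<le> C"
  shows "norm (exp (h *\<^sub>R Z) - 1 - h *\<^sub>R Z) \<le> h\<^sup>2 * (C\<^sup>2 * exp C)"
proof -
  have C: "0 \<le> C" using assms(3) norm_ge_zero order_trans by blast
  have hZ: "norm (h *\<^sub>R Z) \<le> h * C" using assms by (simp add: mult_left_mono)
  have "h * C \<le> C" using assms C by (simp add: mult_left_le_one_le)
  have "norm (exp (h *\<^sub>R Z) - 1 - h *\<^sub>R Z) \<le> norm (h *\<^sub>R Z) ^ 2 * exp (norm (h *\<^sub>R Z))"
    by (rule norm_exp_minus_one_minus_le)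
  also have "\<dots> \<le> (h * C)\<^sup>2 * exp C"
    using hZ \<open>h * C \<le> C\<close> by (intro mult_mono power_mono) auto
  finally show ?thesis by (simp add: power_mult_distrib mult.assoc)
qed

lemma norm_euler_power_minus_exp_le:
  fixes Z B :: "'a::{real_normed_algebra_1,banach}"
  assumes "0 < \<epsilon>" "\<epsilon> \<le> 1" "norm B \<le> C" "norm Z \<le> C" "real k * \<epsilon> \<le> R"
  shows "norm ((1 + \<epsilon> *\<^sub>R B) ^ k - exp ((real k * \<epsilon>) *\<^sub>R Z))
           \<le> exp (R * C) * R * (norm (B - Z) + \<epsilon> * (C\<^sup>2 * exp C))"
proof -
  have C: "0 \<le> C" using assms(4) norm_ge_zero order_trans by blast
  define M where "M = exp (\<epsilon> * C)"
  have step_le: "norm (1 + \<epsilon> *\<^sub>R B) \<le> M"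
  proof -
    have "\<epsilon> * norm B \<le> \<epsilon> * C" using assms(1,3) by (simp add: mult_left_mono)
    moreover have "norm (1 + \<epsilon> *\<^sub>R B) \<le> 1 + \<epsilon> * norm B"
      using norm_triangle_ineq[of 1 "\<epsilon> *\<^sub>R B"] assms(1) by simp
    ultimately have "norm (1 + \<epsilon> *\<^sub>R B) \<le> 1 + \<epsilon> * C" by linarith
    also have "\<dots> \<le> M" unfolding M_def by (rule exp_ge_add_one_self)
    finally show ?thesis .
  qed
  have "norm (\<epsilon> *\<^sub>R Z) \<le> \<epsilon> * C" using assms(1,4) by (simp add: mult_left_mono)
  then have exp_le: "norm (exp (\<epsilon> *\<^sub>R Z)) \<le> M"
    unfolding M_def using norm_exp[of "\<epsilon> *\<^sub>R Z"] by (meson exp_le_cancel_iff order_trans)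
  have Mk: "M ^ k \<le> exp (R * C)"
    using mult_right_mono[OF assms(5) C] by (simp add: M_def exp_of_nat_mult[symmetric] mult.assoc)
  have "1 + \<epsilon> *\<^sub>R B - exp (\<epsilon> *\<^sub>R Z) = \<epsilon> *\<^sub>R (B - Z) - (exp (\<epsilon> *\<^sub>R Z) - 1 - \<epsilon> *\<^sub>R Z)"
    by (simp add: algebra_simps)
  then have "norm (1 + \<epsilon> *\<^sub>R B - exp (\<epsilon> *\<^sub>R Z))
      \<le> norm (\<epsilon> *\<^sub>R (B - Z)) + norm (exp (\<epsilon> *\<^sub>R Z) - 1 - \<epsilon> *\<^sub>R Z)"
    by (metis norm_triangle_ineq4)
  also have "\<dots> \<le> \<epsilon> * norm (B - Z) + \<epsilon>\<^sup>2 * (C\<^sup>2 * exp C)"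
    using norm_exp_scaleR_minus_one_minus_le[of \<epsilon> Z C] assms by simp
  finally have one_step: "norm (1 + \<epsilon> *\<^sub>R B - exp (\<epsilon> *\<^sub>R Z))
      \<le> \<epsilon> * (norm (B - Z) + \<epsilon> * (C\<^sup>2 * exp C))"
    by (simp add: algebra_simps power2_eq_square)
  have "norm ((1 + \<epsilon> *\<^sub>R B) ^ k - exp (\<epsilon> *\<^sub>R Z) ^ k)
          \<le> real k * M ^ k * norm (1 + \<epsilon> *\<^sub>R B - exp (\<epsilon> *\<^sub>R Z))"
    using norm_power_diff_le[OF step_le exp_le] assms(1) C by (simp add: M_def)
  also have "\<dots> \<le> real k * exp (R * C) * (\<epsilon> * (norm (B - Z) + \<epsilon> * (C\<^sup>2 * exp C)))"
    by (intro mult_mono Mk one_step) (auto simp: M_def)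
  also have "\<dots> = exp (R * C) * (real k * \<epsilon>) * (norm (B - Z) + \<epsilon> * (C\<^sup>2 * exp C))"
    by simp
  also have "\<dots> \<le> exp (R * C) * R * (norm (B - Z) + \<epsilon> * (C\<^sup>2 * exp C))"
    using assms(1,5) by (intro mult_right_mono mult_left_mono) auto
  finally show ?thesis by (simp add: exp_scaleR_power)
qed

lemma norm_exp_scaleR_diff_le:
  fixes Z :: "'a::{real_normed_algebra_1,banach}"
  assumes "0 \<le> s" "s \<le> t" "t - s \<le> 1" "t \<le> R" "norm Z \<le> C"
  shows "norm (exp (s *\<^sub>R Z) - exp (t *\<^sub>R Z)) \<le> exp (R * C) * (t - s) * (C\<^sup>2 * exp C + C)"
proof -
  define h where "h = t - s"
  have h: "0 \<le> h" "h \<le> 1" using assms(2,3) by (simp_all add: h_def)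
  have hZ: "norm (h *\<^sub>R Z) \<le> h * C" using h assms(5) by (simp add: mult_left_mono)
  have "norm (s *\<^sub>R Z) \<le> R * C" using assms by (simp add: mult_mono)
  then have exp_s: "norm (exp (s *\<^sub>R Z)) \<le> exp (R * C)"
    using norm_exp[of "s *\<^sub>R Z"] by (meson exp_le_cancel_iff order_trans)
  have "h\<^sup>2 * (C\<^sup>2 * exp C) \<le> h * (C\<^sup>2 * exp C)"
    using h by (intro mult_right_mono) (simp_all add: power2_eq_square mult_left_le_one_le)
  then have rem: "norm (exp (h *\<^sub>R Z) - 1 - h *\<^sub>R Z) \<le> h * (C\<^sup>2 * exp C)"
    using norm_exp_scaleR_minus_one_minus_le[OF h assms(5)] by linarith
  have "exp (t *\<^sub>R Z) = exp (s *\<^sub>R Z) * exp (h *\<^sub>R Z)"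
    by (simp add: h_def exp_scaleR_add_left[symmetric])
  then have "exp (s *\<^sub>R Z) - exp (t *\<^sub>R Z) = - (exp (s *\<^sub>R Z) * ((exp (h *\<^sub>R Z) - 1 - h *\<^sub>R Z) + h *\<^sub>R Z))"
    by (simp add: algebra_simps)
  then have "norm (exp (s *\<^sub>R Z) - exp (t *\<^sub>R Z))
      \<le> norm (exp (s *\<^sub>R Z)) * norm ((exp (h *\<^sub>R Z) - 1 - h *\<^sub>R Z) + h *\<^sub>R Z)"
    by (simp only: norm_minus_cancel norm_mult_ineq)
  also have "\<dots> \<le> norm (exp (s *\<^sub>R Z)) * (norm (exp (h *\<^sub>R Z) - 1 - h *\<^sub>R Z) + norm (h *\<^sub>R Z))"
    by (intro mult_left_mono norm_triangle_ineq norm_ge_zero)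
  also have "\<dots> \<le> exp (R * C) * (h * (C\<^sup>2 * exp C) + h * C)"
    by (intro mult_mono add_mono exp_s rem hZ) auto
  finally show ?thesis by (simp add: h_def algebra_simps)
qed

lemma norm_euler_power_floor_minus_exp_le:
  fixes Z B :: "'a::{real_normed_algebra_1,banach}"
  assumes \<epsilon>: "0 < \<epsilon>" "\<epsilon> \<le> \<eta>" "\<eta> \<le> 1" and B: "norm (B - Z) \<le> \<eta>" and t: "0 \<le> t" "t \<le> R"
  defines "C \<equiv> norm Z + 1"
  shows "norm ((1 + \<epsilon> *\<^sub>R B) ^ nat \<lfloor>t / \<epsilon>\<rfloor> - exp (t *\<^sub>R Z))
           \<le> \<eta> * (exp (R * C) * (R * (1 + C\<^sup>2 * exp C) + C\<^sup>2 * exp C + C))"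
proof -
  define k where "k = nat \<lfloor>t / \<epsilon>\<rfloor>"
  have k: "real k * \<epsilon> \<le> t" "t - real k * \<epsilon> < \<epsilon>"
    unfolding k_def by (rule nat_floor_divide_bounds[OF t(1) \<epsilon>(1)])+
  have "norm B \<le> C"
    using norm_triangle_ineq[of Z "B - Z"] B \<epsilon>(3) by (simp add: C_def)
  then have "norm ((1 + \<epsilon> *\<^sub>R B) ^ k - exp ((real k * \<epsilon>) *\<^sub>R Z))
      \<le> exp (R * C) * R * (norm (B - Z) + \<epsilon> * (C\<^sup>2 * exp C))"
    using k t \<epsilon> by (intro norm_euler_power_minus_exp_le) (auto simp: C_def)
  also have "\<dots> \<le> exp (R * C) * R * (\<eta> + \<eta> * (C\<^sup>2 * exp C))"
    using B \<epsilon> t by (intro mult_left_mono add_mono mult_right_mono) auto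
  finally have euler: "norm ((1 + \<epsilon> *\<^sub>R B) ^ k - exp ((real k * \<epsilon>) *\<^sub>R Z))
      \<le> \<eta> * (exp (R * C) * R * (1 + C\<^sup>2 * exp C))" by (simp add: algebra_simps)
  have "norm (exp ((real k * \<epsilon>) *\<^sub>R Z) - exp (t *\<^sub>R Z))
      \<le> exp (R * C) * (t - real k * \<epsilon>) * (C\<^sup>2 * exp C + C)"
    using k t \<epsilon> by (intro norm_exp_scaleR_diff_le) (auto simp: C_def)
  also have "\<dots> \<le> \<eta> * (exp (R * C) * (C\<^sup>2 * exp C + C))"
    using k \<epsilon> by (simp add: C_def mult.commute mult.left_commute mult_right_mono)
  finally have remainder: "norm (exp ((real k * \<epsilon>) *\<^sub>R Z) - exp (t *\<^sub>R Z))
      \<le> \<eta> * (exp (R * C) * (C\<^sup>2 * exp C + C))" .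
  have "norm ((1 + \<epsilon> *\<^sub>R B) ^ k - exp (t *\<^sub>R Z))
      \<le> norm ((1 + \<epsilon> *\<^sub>R B) ^ k - exp ((real k * \<epsilon>) *\<^sub>R Z)) + norm (exp ((real k * \<epsilon>) *\<^sub>R Z) - exp (t *\<^sub>R Z))"
    by (rule norm_diff_triangle_le[OF order_refl order_refl])
  also have "\<dots> \<le> \<eta> * (exp (R * C) * (R * (1 + C\<^sup>2 * exp C) + C\<^sup>2 * exp C + C))"
    using euler remainder by (simp add: algebra_simps)
  finally show ?thesis unfolding k_def .
qed

theorem euler_power_tendsto_exp_uniformly:
  fixes Z :: "'a::{real_normed_algebra_1,banach}" and B :: "nat \<Rightarrow> 'a"
  assumes B: "B \<longlonglongrightarrow> Z" and \<epsilon>: "\<epsilon> \<longlonglongrightarrow> 0" "\<And>n. 0 < \<epsilon> n" and e: "0 < e"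
  shows "\<exists>N. \<forall>n\<ge>N. \<forall>t\<in>{0..R}. norm ((1 + \<epsilon> n *\<^sub>R B n) ^ nat \<lfloor>t / \<epsilon> n\<rfloor> - exp (t *\<^sub>R Z)) < e"
proof -
  define C where "C = norm Z + 1"
  define Q where "Q = exp (R * C) * (R * (1 + C\<^sup>2 * exp C) + C\<^sup>2 * exp C + C)"
  define \<eta> where "\<eta> = min 1 (e / (2 * (\<bar>Q\<bar> + 1)))"
  have \<eta>: "0 < \<eta>" "\<eta> \<le> 1" unfolding \<eta>_def using e by simp_all
  have "\<eta> * Q < e"
  proof -
    have "\<eta> * Q \<le> \<eta> * \<bar>Q\<bar>" using \<eta>(1) by (intro mult_left_mono) auto
    also have "\<dots> \<le> e / (2 * (\<bar>Q\<bar> + 1)) * \<bar>Q\<bar>" unfolding \<eta>_def by (intro mult_right_mono) auto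
    also have "\<dots> = (e / 2) * (\<bar>Q\<bar> / (\<bar>Q\<bar> + 1))" by simp
    also have "\<dots> \<le> e / 2" using e by (intro mult_left_le) auto
    also have "\<dots> < e" using e by simp
    finally show ?thesis .
  qed
  have "\<forall>\<^sub>F n in sequentially. norm (B n - Z) < \<eta> \<and> \<epsilon> n < \<eta>"
    using tendstoD[OF B \<eta>(1)] tendstoD[OF \<epsilon>(1) \<eta>(1)] by eventually_elim (auto simp: dist_norm)
  then obtain N where N: "\<And>n. n \<ge> N \<Longrightarrow> norm (B n - Z) < \<eta> \<and> \<epsilon> n < \<eta>"
    unfolding eventually_sequentially by blast
  have "norm ((1 + \<epsilon> n *\<^sub>R B n) ^ nat \<lfloor>t / \<epsilon> n\<rfloor> - exp (t *\<^sub>R Z)) \<le> \<eta> * Q"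
    if "N \<le> n" "t \<in> {0..R}" for n t
  proof -
    have "norm (B n - Z) \<le> \<eta>" "\<epsilon> n \<le> \<eta>" using N[OF that(1)] by auto
    then show ?thesis
      unfolding Q_def C_def using that(2) \<epsilon>(2)[of n] \<eta>(2)
      by (intro norm_euler_power_floor_minus_exp_le) simp_all
  qed
  then show ?thesis using \<open>\<eta> * Q < e\<close> by (meson le_less_trans)
qed

section \<open>Finite-dimensional subspaces of \<open>C(X)\<close>\<close>

lemma apply_bcontfun_sum:
  "apply_bcontfun (\<Sum>i\<in>S. f i) x = (\<Sum>i\<in>S. apply_bcontfun (f i) x)"
  by (induction S rule: infinite_finite_induct) auto

lemma bounded_linear_apply_bcontfun:
  "bounded_linear (\<lambda>f::'b::topological_space \<Rightarrow>\<^sub>C real. apply_bcontfun f x)"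
proof (rule bounded_linear_intro[where K = 1])
  show "norm (apply_bcontfun f x) \<le> norm f * 1" for f :: "'b \<Rightarrow>\<^sub>C real"
    using norm_bounded[of f x] by simp
qed simp_all

definition interpolate ::
  "nat \<Rightarrow> (nat \<Rightarrow> 'b) \<Rightarrow> (nat \<Rightarrow> 'b::topological_space \<Rightarrow>\<^sub>C real) \<Rightarrow> ('b \<Rightarrow>\<^sub>C real) \<Rightarrow> ('b \<Rightarrow>\<^sub>C real)"
  where "interpolate d p w f = (\<Sum>i<d. apply_bcontfun f (p i) *\<^sub>R w i)"

lemma bounded_linear_interpolate: "bounded_linear (interpolate d p w)"
  unfolding interpolate_def
  by (intro bounded_linear_sum bounded_linear_compose[OF bounded_linear_scaleR_left
        bounded_linear_apply_bcontfun])

lemma norm_interpolate_le: "norm (interpolate d p w f) \<le> norm f * (\<Sum>i<d. norm (w i))"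
proof -
  have "norm (interpolate d p w f) \<le> (\<Sum>i<d. norm (apply_bcontfun f (p i) *\<^sub>R w i))"
    unfolding interpolate_def by (rule norm_sum)
  also have "\<dots> \<le> (\<Sum>i<d. norm f * norm (w i))"
    by (intro sum_mono) (simp add: mult_right_mono norm_bounded[of f, simplified])
  finally show ?thesis by (simp add: sum_distrib_left)
qed

lemma interpolate_in_subspace:
  "subspace V \<Longrightarrow> (\<And>i. i < d \<Longrightarrow> w i \<in> V) \<Longrightarrow> interpolate d p w f \<in> V"
  unfolding interpolate_def by (auto intro!: subspace_sum subspace_scale)

lemma interpolate_diff: "interpolate d p w f - interpolate d p w' f = interpolate d p (\<lambda>i. w i - w' i) f"
  unfolding interpolate_def by (simp add: sum_subtractf scaleR_diff_right)

lemma endo_of_interpolate_tendsto: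
  assumes "\<And>i. i < d \<Longrightarrow> (\<lambda>n. w n i) \<longlonglongrightarrow> w' i"
  shows "(\<lambda>n. endo_of (interpolate d p (w n))) \<longlonglongrightarrow> endo_of (interpolate d p w')"
proof (rule LIM_zero_cancel, rule Lim_null_comparison)
  show "\<forall>\<^sub>F n in sequentially.
      norm (endo_of (interpolate d p (w n)) - endo_of (interpolate d p w')) \<le> (\<Sum>i<d. norm (w n i - w' i))"
  proof (intro always_eventually allI norm_endo_le)
    fix n v
    have "norm (endo_apply (endo_of (interpolate d p (w n)) - endo_of (interpolate d p w')) v)
        = norm (interpolate d p (\<lambda>i. w n i - w' i) v)"
      by (simp add: endo_apply_diff endo_apply_endo_of bounded_linear_interpolate interpolate_diff)
    also have "\<dots> \<le> (\<Sum>i<d. norm (w n i - w' i)) * norm v"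
      using norm_interpolate_le by (simp add: mult.commute)
    finally show "norm (endo_apply (endo_of (interpolate d p (w n)) - endo_of (interpolate d p w')) v)
        \<le> (\<Sum>i<d. norm (w n i - w' i)) * norm v" .
  qed (simp add: sum_nonneg)
  show "(\<lambda>n. \<Sum>i<d. norm (w n i - w' i)) \<longlonglongrightarrow> 0"
    using assms by (intro tendsto_null_sum) (auto intro!: tendsto_norm_zero LIM_zero)
qed

definition interpolating :: "nat \<Rightarrow> (nat \<Rightarrow> 'b) \<Rightarrow> (nat \<Rightarrow> 'b::topological_space \<Rightarrow>\<^sub>C real) \<Rightarrow> bool"
  where "interpolating d p v \<longleftrightarrow> (\<forall>i<d. \<forall>j<d. apply_bcontfun (v i) (p j) = (if i = j then 1 else 0))"

lemma interpolate_span_eq: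
  assumes "interpolating d p v" and "x \<in> span (v ` {..<d})"
  shows "interpolate d p v x = x"
proof -
  have lin: "linear (interpolate d p v)" by (rule bounded_linear.linear[OF bounded_linear_interpolate])
  have "subspace {x. interpolate d p v x = x}"
    using linear_0[OF lin] linear_add[OF lin] linear_scale[OF lin] by (auto simp: subspace_def)
  moreover have "v ` {..<d} \<subseteq> {x. interpolate d p v x = x}"
  proof clarsimp
    fix j assume j: "j < d"
    have "interpolate d p v (v j) = (\<Sum>i<d. if i = j then v i else 0)"
      using assms(1) j unfolding interpolating_def interpolate_def
      by (intro sum.cong) (auto simp: apply_bcontfun_sum)
    then show "interpolate d p v (v j) = v j" using j by simp
  qed
  ultimately show ?thesis using span_minimal assms(2) by blast
qed

lemma interpolate_at_node:
  assumes "interpolating d p v" "j < d"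
  shows "apply_bcontfun (interpolate d p v f) (p j) = apply_bcontfun f (p j)"
proof -
  have "apply_bcontfun (interpolate d p v f) (p j) = (\<Sum>i<d. apply_bcontfun f (p i) * apply_bcontfun (v i) (p j))"
    by (simp add: interpolate_def apply_bcontfun_sum)
  also have "\<dots> = (\<Sum>i<d. if i = j then apply_bcontfun f (p i) else 0)"
    using assms unfolding interpolating_def by (intro sum.cong) auto
  finally show ?thesis using assms(2) by simp
qed

lemma span_insert_diff:
  assumes "y \<in> span S"
  shows "span (insert (x - y) S) = span (insert x S)"
proof -
  have sub: "span S \<subseteq> span (insert z S)" for z by (rule span_mono) auto
  have "x - y \<in> span (insert x S)"
    using assms sub by (intro span_diff) (auto intro: span_base)
  moreover have "x = (x - y) + y" by simp
  then have "x \<in> span (insert (x - y) S)"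
    using assms sub by (metis insertI1 span_add span_base subsetD)
  ultimately show ?thesis
    unfolding span_eq using sub span_superset by (auto intro: span_base)
qed

lemma interpolating_extend:
  assumes interp: "interpolating d p v"
    and r: "\<And>j. j < d \<Longrightarrow> apply_bcontfun r (p j) = 0" "apply_bcontfun r q \<noteq> 0"
  defines "w \<equiv> r /\<^sub>R apply_bcontfun r q"
  defines "v' \<equiv> \<lambda>i. if i = d then w else v i - apply_bcontfun (v i) q *\<^sub>R w"
  shows "interpolating (Suc d) (p(d := q)) v'"
    and "span (v' ` {..<Suc d}) = span (insert r (v ` {..<d}))"
proof -
  show "interpolating (Suc d) (p(d := q)) v'"
    using interp r unfolding interpolating_def v'_def w_def by (auto simp: less_Suc_eq)
  have w: "w \<in> span (insert r (v ` {..<d}))" unfolding w_def by (intro span_scale span_base) simp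
  have w': "w \<in> span (v' ` {..<Suc d})" by (rule span_base) (auto simp: v'_def)
  have "v i \<in> span (v' ` {..<Suc d})" if "i < d" for i
  proof -
    have "v i = v' i + apply_bcontfun (v i) q *\<^sub>R w" using that by (simp add: v'_def)
    then show ?thesis using that w' by (metis span_add span_base span_scale image_eqI lessThan_iff less_SucI)
  qed
  moreover have "r = apply_bcontfun r q *\<^sub>R w" using r(2) by (simp add: w_def)
  then have "r \<in> span (v' ` {..<Suc d})" using w' by (metis span_scale)
  moreover have "v' i \<in> span (insert r (v ` {..<d}))" if "i < Suc d" for i
  proof (cases "i = d")
    case False
    then have "v i \<in> span (insert r (v ` {..<d}))" using that by (intro span_base) auto
    then show ?thesis using False w by (simp add: v'_def span_diff span_scale)
  qed (use w in \<open>simp add: v'_def\<close>)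
  then have "v' ` {..<Suc d} \<subseteq> span (insert r (v ` {..<d}))" by auto
  ultimately show "span (v' ` {..<Suc d}) = span (insert r (v ` {..<d}))"
    unfolding span_eq by auto
qed

lemma finite_span_interpolating_basis:
  fixes B :: "('b::topological_space \<Rightarrow>\<^sub>C real) set"
  assumes "finite B"
  shows "\<exists>d p v. interpolating d p v \<and> span (v ` {..<d}) = span B"
  using assms
proof (induction B rule: finite_induct)
  case empty
  show ?case by (intro exI[of _ "0::nat"]) (auto simp: interpolating_def)
next
  case (insert b B)
  from insert.IH obtain d p v where
    interp: "interpolating d p v" and span_v: "span (v ` {..<d}) = span B" by blast
  have Ib: "interpolate d p v b \<in> span (v ` {..<d})"
    unfolding interpolate_def by (intro span_sum span_scale span_base) auto
  define r where "r = b - interpolate d p v b"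
  have span_r: "span (insert r (v ` {..<d})) = span (insert b B)"
    unfolding r_def span_insert_diff[OF Ib] by (simp add: span_insert span_v)
  show ?case
  proof (cases "r = 0")
    case True
    then have "span (v ` {..<d}) = span (insert b B)" using span_r by simp
    then show ?thesis using interp by blast
  next
    case False
    then obtain q where q: "apply_bcontfun r q \<noteq> 0" by (metis bcontfun_eqI zero_bcontfun.rep_eq)
    have "apply_bcontfun r (p j) = 0" if "j < d" for j
      using interpolate_at_node[OF interp that] by (simp add: r_def)
    from interpolating_extend[OF interp this q] span_r show ?thesis by blast
  qed
qed

lemma finite_span_continuous_projection:
  fixes B :: "('b::topological_space \<Rightarrow>\<^sub>C real) set"
  assumes "finite B"
  obtains P where "bounded_linear P" "\<And>f. P f \<in> span B" "\<And>f. f \<in> span B \<Longrightarrow> P f = f"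
proof -
  obtain d p v where interp: "interpolating d p v" and span_v: "span (v ` {..<d}) = span B"
    using finite_span_interpolating_basis[OF assms] by blast
  show thesis
  proof
    show "bounded_linear (interpolate d p v)" by (rule bounded_linear_interpolate)
    show "interpolate d p v f \<in> span B" for f
      unfolding span_v[symmetric] by (intro interpolate_in_subspace subspace_span span_base) auto
    show "f \<in> span B \<Longrightarrow> interpolate d p v f = f" for f
      using interpolate_span_eq[OF interp] span_v by simp
  qed
qed

lemma closed_finite_span_bcontfun:
  fixes B :: "('b::topological_space \<Rightarrow>\<^sub>C real) set"
  assumes "finite B"
  shows "closed (span B)"
proof -
  obtain P where P: "bounded_linear P" "\<And>f. P f \<in> span B" "\<And>f. f \<in> span B \<Longrightarrow> P f = f"
    using finite_span_continuous_projection[OF assms] by blast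
  then have "span B = {f. P f = f}" by (metis (mono_tags) Collect_cong Collect_mem_eq)
  then show ?thesis
    using P(1) by (simp add: closed_Collect_eq continuous_on_id linear_continuous_on)
qed

section \<open>The up-down Markov operators \<open>T\<^sub>n\<close>\<close>

locale up_down_chain =
  fixes lev :: "'l \<Rightarrow> nat"
    and pd :: "'l \<Rightarrow> 'l \<Rightarrow> real"
    and M :: "'l \<Rightarrow> real"
  assumes kernel: "graded_down_kernel lev pd"
    and coh: "coherent_system lev pd M"
    and M_pos: "\<And>la. M la > 0"
begin

abbreviation "L n \<equiv> level_set lev n"
abbreviation "T n \<equiv> T_op lev pd M n"

lemma mem_level_set_iff: "la \<in> L n \<longleftrightarrow> lev la = n"
  unfolding level_set_def by simp

lemma pd_nonneg: "pd a b \<ge> 0"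
  using kernel unfolding graded_down_kernel_def by blast

lemma p_up_nonneg: "p_up pd M a b \<ge> 0"
  unfolding p_up_def using M_pos[of a] M_pos[of b] pd_nonneg[of b a] by simp

lemma sum_pd_eq_1: "nu \<in> L (Suc n) \<Longrightarrow> (\<Sum>la'\<in>L n. pd nu la') = 1"
  using kernel unfolding graded_down_kernel_def by (metis diff_Suc_1 le_add1 mem_level_set_iff plus_1_eq_Suc)

lemma sum_p_up_eq_1: "la \<in> L n \<Longrightarrow> (\<Sum>nu\<in>L (Suc n). p_up pd M la nu) = 1"
proof -
  assume la: "la \<in> L n"
  have "(\<Sum>nu\<in>L (Suc n). p_up pd M la nu) = (\<Sum>nu\<in>L (Suc n). M nu * pd nu la) / M la"
    unfolding p_up_def by (simp add: sum_divide_distrib)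
  also have "(\<Sum>nu\<in>L (Suc n). M nu * pd nu la) = M la"
    using coh la unfolding coherent_system_def by blast
  finally show ?thesis using M_pos[of la] by simp
qed

lemma T_apply:
  "la \<in> L n \<Longrightarrow> T n g la = (\<Sum>nu\<in>L (Suc n). p_up pd M la nu * (\<Sum>la'\<in>L n. pd nu la' * g la'))"
  unfolding T_op_def by (simp add: mem_level_set_iff)

lemma T_outside: "la \<notin> L n \<Longrightarrow> T n g la = 0"
  unfolding T_op_def by (simp add: mem_level_set_iff)

lemma abs_T_le:
  assumes "\<forall>la\<in>L n. \<bar>g la\<bar> \<le> c" "la \<in> L n"
  shows "\<bar>T n g la\<bar> \<le> c"
proof -
  have "\<bar>T n g la\<bar> \<le> (\<Sum>nu\<in>L (Suc n). p_up pd M la nu * (\<Sum>la'\<in>L n. pd nu la' * c))"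
    unfolding T_apply[OF assms(2)]
  proof (rule order_trans[OF sum_abs], intro sum_mono)
    fix nu
    have "\<bar>\<Sum>la'\<in>L n. pd nu la' * g la'\<bar> \<le> (\<Sum>la'\<in>L n. pd nu la' * c)"
      using assms(1) pd_nonneg[of nu]
      by (intro order_trans[OF sum_abs] sum_mono) (simp add: abs_mult mult_left_mono)
    then show "\<bar>p_up pd M la nu * (\<Sum>la'\<in>L n. pd nu la' * g la')\<bar>
        \<le> p_up pd M la nu * (\<Sum>la'\<in>L n. pd nu la' * c)"
      using p_up_nonneg[of la nu] by (simp add: abs_mult mult_left_mono)
  qed
  also have "\<dots> = c"
    using sum_p_up_eq_1[OF assms(2)] sum_pd_eq_1
    by (simp add: sum_distrib_right[symmetric] mult.assoc[symmetric] sum_distrib_left[symmetric])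
  finally show ?thesis .
qed

lemma T_nonneg: "\<forall>la\<in>L n. 0 \<le> g la \<Longrightarrow> 0 \<le> T n g la"
  unfolding T_op_def using p_up_nonneg pd_nonneg
  by (auto intro!: sum_nonneg mult_nonneg_nonneg simp: mem_level_set_iff)

lemma T_level_indicator: "la \<in> L n \<Longrightarrow> T n (\<lambda>x. if lev x = n then 1 else 0) la = 1"
proof -
  assume la: "la \<in> L n"
  have "(\<Sum>la'\<in>L n. pd nu la' * (if lev la' = n then 1 else 0)) = 1" if "nu \<in> L (Suc n)" for nu
    using sum_pd_eq_1[OF that] by (simp add: mem_level_set_iff)
  then show ?thesis using sum_p_up_eq_1[OF la] by (simp add: T_apply[OF la])
qed

lemma T_diff: "T n (\<lambda>x. g x - h x) = (\<lambda>x. T n g x - T n h x)"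
  unfolding T_op_def by (auto simp: sum_subtractf right_diff_distrib)

lemma T_add_scaled: "T n (\<lambda>x. g x + c * h x) = (\<lambda>x. T n g x + c * T n h x)"
  unfolding T_op_def by (auto simp: sum.distrib distrib_left sum_distrib_left mult.left_commute)

lemma abs_T_power_le: "\<forall>la\<in>L n. \<bar>g la\<bar> \<le> c \<Longrightarrow> \<forall>la\<in>L n. \<bar>(T n ^^ k) g la\<bar> \<le> c"
  by (induction k) (use abs_T_le in auto)

lemma T_power_nonneg: "\<forall>la\<in>L n. 0 \<le> g la \<Longrightarrow> \<forall>la\<in>L n. 0 \<le> (T n ^^ k) g la"
  by (induction k) (use T_nonneg in auto)

lemma T_power_diff: "(T n ^^ k) (\<lambda>x. g x - h x) = (\<lambda>x. (T n ^^ k) g x - (T n ^^ k) h x)"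
  by (induction k) (auto simp: T_diff)

end

section \<open>The generator on the finite-dimensional levels\<close>

locale approximation_scheme = up_down_chain lev pd M
  for lev :: "'l \<Rightarrow> nat" and pd M +
  fixes \<iota> :: "nat \<Rightarrow> 'l \<Rightarrow> 'b::topological_space"
    and \<F> :: "('b \<Rightarrow>\<^sub>C real) set"
    and \<F>m :: "nat \<Rightarrow> ('b \<Rightarrow>\<^sub>C real) set"
    and \<epsilon> :: "nat \<Rightarrow> real"
    and A :: "('b \<Rightarrow>\<^sub>C real) \<Rightarrow> ('b \<Rightarrow>\<^sub>C real)"
  assumes levels_dense: "\<And>U. open U \<Longrightarrow> U \<noteq> {} \<Longrightarrow>
               \<exists>N. \<forall>n\<ge>N. U \<inter> \<iota> n ` level_set lev n \<noteq> {}"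
    and F_subspace: "subspace \<F>" and F_dense: "closure \<F> = UNIV"
    and Fm_subspace: "\<And>m. subspace (\<F>m m)"
    and Fm_finite_span: "\<And>m. \<exists>B. finite B \<and> \<F>m m = span B"
    and Fm_Suc: "\<And>m. \<F>m m \<subseteq> \<F>m (Suc m)"
    and Union_Fm: "(\<Union>m. \<F>m m) = \<F>"
    and proj_inj: "\<And>m. \<exists>N. \<forall>n\<ge>N. inj_on (proj lev \<iota> n) (\<F>m m)"
    and \<epsilon>_pos: "\<And>n. \<epsilon> n > 0" and \<epsilon>_tendsto: "\<epsilon> \<longlonglongrightarrow> 0"
    and A_limit: "\<And>m f. f \<in> \<F>m m \<Longrightarrow>
               \<exists>g. (\<forall>\<^sub>F n in sequentially. g n \<in> \<F>m m \<and>
                      proj lev \<iota> n (g n) =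
                        (\<lambda>la. (T_op lev pd M n (proj lev \<iota> n f) la - proj lev \<iota> n f la) / \<epsilon> n))
                    \<and> g \<longlonglongrightarrow> A f"
    and one_in_F: "const_bcontfun 1 \<in> \<F>"
begin

abbreviation "\<pi> n \<equiv> proj lev \<iota> n"

abbreviation "D n f \<equiv> (\<lambda>la. (T n (\<pi> n f) la - \<pi> n f la) / \<epsilon> n)"

lemma proj_apply: "la \<in> L n \<Longrightarrow> \<pi> n f la = apply_bcontfun f (\<iota> n la)"
  unfolding proj_def by (simp add: mem_level_set_iff)

lemma abs_proj_le: "\<bar>\<pi> n f la\<bar> \<le> norm f"
  unfolding proj_def using norm_bounded[of f] by auto

lemma proj_diff: "\<pi> n (f - g) = (\<lambda>x. \<pi> n f x - \<pi> n g x)"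
  unfolding proj_def by auto

lemma proj_add_scaled: "\<pi> n (f + c *\<^sub>R g) = (\<lambda>x. \<pi> n f x + c * \<pi> n g x)"
  unfolding proj_def by auto

lemma proj_one: "\<pi> n (const_bcontfun 1) = (\<lambda>x. if lev x = n then 1 else 0)"
  unfolding proj_def by auto

lemma linear_proj_at: "linear (\<lambda>f. \<pi> n f la)"
  by (rule linearI) (auto simp: proj_def)

lemma linear_D_at: "linear (\<lambda>f. D n f la)"
proof (rule linearI)
  fix f g :: "'b \<Rightarrow>\<^sub>C real" and c :: real
  show "D n (f + g) la = D n f la + D n g la"
    using T_add_scaled[of n "\<pi> n f" 1 "\<pi> n g"] proj_add_scaled[of n f 1 g]
    by (simp add: add_diff_add add_divide_distrib)
  have "\<pi> n (c *\<^sub>R f) = (\<lambda>x. \<pi> n 0 x + c * \<pi> n f x)" using proj_add_scaled[of n 0 c f] by simp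
  moreover have "\<pi> n 0 = (\<lambda>x. 0)" unfolding proj_def by (rule ext) simp
  moreover have "T n (\<lambda>x. 0) = (\<lambda>x. 0)" unfolding T_op_def by (rule ext) simp
  ultimately show "D n (c *\<^sub>R f) la = c *\<^sub>R D n f la"
    using T_add_scaled[of n "\<lambda>x. 0" c "\<pi> n f"] by (simp add: right_diff_distrib)
qed

lemma le_of_eventually_le_on_levels:
  fixes y :: "'b \<Rightarrow>\<^sub>C real"
  assumes "\<And>\<delta>. \<delta> > 0 \<Longrightarrow> \<forall>\<^sub>F n in sequentially. \<forall>la\<in>L n. apply_bcontfun y (\<iota> n la) \<le> c + \<delta>"
  shows "apply_bcontfun y x \<le> c"
proof (rule ccontr)
  assume "\<not> apply_bcontfun y x \<le> c"
  define \<delta> where "\<delta> = (apply_bcontfun y x - c) / 2"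
  have \<delta>: "\<delta> > 0" using \<open>\<not> apply_bcontfun y x \<le> c\<close> by (simp add: \<delta>_def)
  define U where "U = {z. c + \<delta> < apply_bcontfun y z}"
  have "open U" unfolding U_def by (rule open_Collect_less) (auto intro: continuous_intros)
  moreover have "x \<in> U" using \<delta> by (simp add: U_def \<delta>_def field_simps)
  ultimately obtain N1 where N1: "\<forall>n\<ge>N1. U \<inter> \<iota> n ` L n \<noteq> {}" using levels_dense by blast
  obtain N2 where N2: "\<forall>n\<ge>N2. \<forall>la\<in>L n. apply_bcontfun y (\<iota> n la) \<le> c + \<delta>"
    using assms[OF \<delta>] unfolding eventually_sequentially by blast
  have "U \<inter> \<iota> (max N1 N2) ` L (max N1 N2) \<noteq> {}" using N1 by simp
  then obtain la where la: "la \<in> L (max N1 N2)" "\<iota> (max N1 N2) la \<in> U" by blast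
  then have "apply_bcontfun y (\<iota> (max N1 N2) la) \<le> c + \<delta>" using N2 by simp
  with la(2) show False unfolding U_def by simp
qed

lemma norm_le_of_eventually_le_on_levels:
  fixes y :: "'b \<Rightarrow>\<^sub>C real"
  assumes "\<And>\<delta>. \<delta> > 0 \<Longrightarrow> \<forall>\<^sub>F n in sequentially. \<forall>la\<in>L n. \<bar>apply_bcontfun y (\<iota> n la)\<bar> \<le> c + \<delta>"
  shows "norm y \<le> c"
proof (rule norm_bound)
  fix x
  have "apply_bcontfun y x \<le> c"
    by (rule le_of_eventually_le_on_levels, rule eventually_mono[OF assms]) auto
  moreover have "apply_bcontfun (- y) x \<le> c"
    by (rule le_of_eventually_le_on_levels, rule eventually_mono[OF assms]) auto
  ultimately show "norm (apply_bcontfun y x) \<le> c" by simp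
qed

lemma nonneg_of_eventually_ge_on_levels:
  fixes y :: "'b \<Rightarrow>\<^sub>C real"
  assumes "\<And>\<delta>. \<delta> > 0 \<Longrightarrow> \<forall>\<^sub>F n in sequentially. \<forall>la\<in>L n. - \<delta> \<le> apply_bcontfun y (\<iota> n la)"
  shows "0 \<le> apply_bcontfun y x"
proof -
  have "apply_bcontfun (- y) x \<le> 0"
    by (rule le_of_eventually_le_on_levels, rule eventually_mono[OF assms]) auto
  then show ?thesis by simp
qed

lemma closed_Fm: "closed (\<F>m m)"
proof -
  obtain B where "finite B" "\<F>m m = span B" using Fm_finite_span by blast
  then show ?thesis using closed_finite_span_bcontfun by simp
qed

lemma Fm_mono: "m \<le> m' \<Longrightarrow> \<F>m m \<subseteq> \<F>m m'"
  using lift_Suc_mono_le[of \<F>m, OF Fm_Suc] by blast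

lemma Fm_subset_F: "f \<in> \<F>m m \<Longrightarrow> f \<in> \<F>"
  using Union_Fm by blast

lemma F_in_common_level:
  assumes "f \<in> \<F>" "g \<in> \<F>"
  obtains m where "f \<in> \<F>m m" "g \<in> \<F>m m"
proof -
  obtain m1 m2 where "f \<in> \<F>m m1" "g \<in> \<F>m m2" using assms Union_Fm by blast
  then show thesis using that Fm_mono[of m1 "max m1 m2"] Fm_mono[of m2 "max m1 m2"] by auto
qed

text \<open>Hypothesis A4 determines \<open>A f\<close> from any sequence in \<open>\<F>m m\<close> that solves
  \<open>\<pi>\<^sub>n h\<^sub>n = D\<^sub>n f\<close>, because \<open>\<pi>\<^sub>n\<close> is eventually injective on \<open>\<F>m m\<close>.\<close>

lemma A_eqI:
  assumes f: "f \<in> \<F>m m"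
    and h: "\<forall>\<^sub>F n in sequentially. h n \<in> \<F>m m \<and> \<pi> n (h n) = D n f" "h \<longlonglongrightarrow> y"
  shows "A f = y"
proof -
  obtain g where g: "\<forall>\<^sub>F n in sequentially. g n \<in> \<F>m m \<and> \<pi> n (g n) = D n f" "g \<longlonglongrightarrow> A f"
    using A_limit[OF f] by blast
  obtain N where "\<forall>n\<ge>N. inj_on (\<pi> n) (\<F>m m)" using proj_inj by blast
  then have "\<forall>\<^sub>F n in sequentially. inj_on (\<pi> n) (\<F>m m)"
    unfolding eventually_sequentially by blast
  with g(1) h(1) have "\<forall>\<^sub>F n in sequentially. g n = h n"
  proof eventually_elim
    case (elim n)
    then show ?case using inj_onD[of "\<pi> n" "\<F>m m" "g n" "h n"] by auto
  qed
  then have "h \<longlonglongrightarrow> A f" by (rule Lim_transform_eventually[OF g(2)])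
  then show ?thesis using h(2) LIMSEQ_unique by blast
qed

lemma A_in_Fm: "f \<in> \<F>m m \<Longrightarrow> A f \<in> \<F>m m"
proof -
  assume "f \<in> \<F>m m"
  then obtain g where "\<forall>\<^sub>F n in sequentially. g n \<in> \<F>m m \<and> \<pi> n (g n) = D n f" "g \<longlonglongrightarrow> A f"
    using A_limit by blast
  then show ?thesis
    by (intro Lim_in_closed_set[OF closed_Fm _ sequentially_bot]) (auto elim: eventually_mono)
qed

lemma A_in_F: "f \<in> \<F> \<Longrightarrow> A f \<in> \<F>"
  using Union_Fm A_in_Fm by blast

lemma A_one: "A (const_bcontfun 1) = 0"
proof -
  obtain m where one: "const_bcontfun 1 \<in> \<F>m m" using one_in_F Union_Fm by blast
  have "\<pi> n 0 = D n (const_bcontfun 1)" for n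
  proof
    fix la
    show "\<pi> n 0 la = D n (const_bcontfun 1) la"
      unfolding proj_one
      by (cases "la \<in> L n") (simp_all add: T_level_indicator T_outside proj_def mem_level_set_iff)
  qed
  then show ?thesis
    using subspace_0[OF Fm_subspace] by (intro A_eqI[OF one, of "\<lambda>_. 0"]) auto
qed

lemma proj_interpolate_eq_D:
  assumes interp: "interpolating d p v" and f: "f \<in> span (v ` {..<d})"
    and G: "\<And>i. i < d \<Longrightarrow> \<pi> n (G i) = D n (v i)"
  shows "\<pi> n (interpolate d p G f) = D n f"
proof
  fix la
  have "\<pi> n (interpolate d p G f) la = (\<Sum>i<d. apply_bcontfun f (p i) * \<pi> n (G i) la)"
    unfolding interpolate_def by (simp add: linear_sum[OF linear_proj_at] linear_scale[OF linear_proj_at])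
  also have "\<dots> = (\<Sum>i<d. apply_bcontfun f (p i) * D n (v i) la)"
    using G by simp
  also have "\<dots> = D n (interpolate d p v f) la"
    unfolding interpolate_def by (simp add: linear_sum[OF linear_D_at] linear_scale[OF linear_D_at])
  also have "\<dots> = D n f la" using interpolate_span_eq[OF interp f] by simp
  finally show "\<pi> n (interpolate d p G f) la = D n f la" .
qed

definition level_generator :: "nat \<Rightarrow> 'b endo \<Rightarrow> (nat \<Rightarrow> 'b endo) \<Rightarrow> nat \<Rightarrow> bool" where
  "level_generator m Ah Bn N \<longleftrightarrow> (\<forall>f\<in>\<F>m m. A f = endo_apply Ah f) \<and>
     (\<forall>n\<ge>N. \<forall>f\<in>\<F>m m. endo_apply (Bn n) f \<in> \<F>m m \<and> \<pi> n (endo_apply (Bn n) f) = D n f) \<and>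
     Bn \<longlonglongrightarrow> Ah"

lemma Fm_interpolating_basis:
  obtains d p v where "interpolating d p v" "span (v ` {..<d}) = \<F>m m"
proof -
  obtain B where B: "finite B" "\<F>m m = span B" using Fm_finite_span by blast
  then show thesis using finite_span_interpolating_basis[OF B(1)] that by auto
qed

lemma A_limits_finite_family:
  fixes d :: nat
  assumes v: "\<And>i. i < d \<Longrightarrow> v i \<in> \<F>m m"
  shows "\<exists>N G. (\<forall>n\<ge>N. \<forall>i<d. G i n \<in> \<F>m m \<and> \<pi> n (G i n) = D n (v i)) \<and> (\<forall>i<d. G i \<longlonglongrightarrow> A (v i))"
proof -
  have "\<forall>i\<in>{..<d}. \<exists>g. (\<forall>\<^sub>F n in sequentially. g n \<in> \<F>m m \<and> \<pi> n (g n) = D n (v i)) \<and> g \<longlonglongrightarrow> A (v i)"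
    using A_limit v by simp
  from bchoice[OF this] obtain G where
    G: "\<forall>i\<in>{..<d}. (\<forall>\<^sub>F n in sequentially. G i n \<in> \<F>m m \<and> \<pi> n (G i n) = D n (v i)) \<and> G i \<longlonglongrightarrow> A (v i)"
    by blast
  have "\<forall>\<^sub>F n in sequentially. \<forall>i\<in>{..<d}. G i n \<in> \<F>m m \<and> \<pi> n (G i n) = D n (v i)"
    by (rule eventually_ball_finite) (use G in auto)
  then obtain N where "\<forall>n\<ge>N. \<forall>i<d. G i n \<in> \<F>m m \<and> \<pi> n (G i n) = D n (v i)"
    unfolding eventually_sequentially by auto
  with G show ?thesis by auto
qed

lemma level_generator_exists: "\<exists>Ah Bn N. level_generator m Ah Bn N"
proof -
  obtain d p v where interp: "interpolating d p v" and span_v: "span (v ` {..<d}) = \<F>m m"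
    by (rule Fm_interpolating_basis)
  have v: "v i \<in> \<F>m m" if "i < d" for i
    unfolding span_v[symmetric] using that by (intro span_base) auto
  obtain N G where
    N: "\<forall>n\<ge>N. \<forall>i<d. G i n \<in> \<F>m m \<and> \<pi> n (G i n) = D n (v i)" and
    G: "\<forall>i<d. G i \<longlonglongrightarrow> A (v i)"
    using A_limits_finite_family[of d v, OF v] by blast
  define Ah where "Ah = endo_of (interpolate d p (\<lambda>i. A (v i)))"
  define Bn where "Bn = (\<lambda>n. endo_of (interpolate d p (\<lambda>i. G i n)))"
  have Bn_apply: "endo_apply (Bn n) f = interpolate d p (\<lambda>i. G i n) f" for n f
    by (simp add: Bn_def endo_apply_endo_of bounded_linear_interpolate)
  have Bn_tendsto: "Bn \<longlonglongrightarrow> Ah"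
    unfolding Bn_def Ah_def by (rule endo_of_interpolate_tendsto) (use G in auto)
  have Bn_lifts: "endo_apply (Bn n) f \<in> \<F>m m \<and> \<pi> n (endo_apply (Bn n) f) = D n f"
    if n: "N \<le> n" and f: "f \<in> \<F>m m" for n f
  proof
    show "endo_apply (Bn n) f \<in> \<F>m m"
      unfolding Bn_apply using N n by (intro interpolate_in_subspace Fm_subspace) auto
    show "\<pi> n (endo_apply (Bn n) f) = D n f"
      unfolding Bn_apply using proj_interpolate_eq_D[OF interp] f span_v N n by simp
  qed
  have "A f = endo_apply Ah f" if f: "f \<in> \<F>m m" for f
  proof (rule A_eqI[OF f])
    show "\<forall>\<^sub>F n in sequentially. endo_apply (Bn n) f \<in> \<F>m m \<and> \<pi> n (endo_apply (Bn n) f) = D n f"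
      using Bn_lifts f unfolding eventually_sequentially by blast
    show "(\<lambda>n. endo_apply (Bn n) f) \<longlonglongrightarrow> endo_apply Ah f"
      by (rule bounded_linear.tendsto[OF bounded_linear_endo_apply_left Bn_tendsto])
  qed
  then show ?thesis
    unfolding level_generator_def using Bn_lifts Bn_tendsto by blast
qed

end

section \<open>The semigroup \<open>exp (t A)\<close> on \<open>\<F>\<close>\<close>

context approximation_scheme
begin

lemma F_level_generator:
  assumes "f \<in> \<F>"
  obtains m Ah Bn N where "f \<in> \<F>m m" "level_generator m Ah Bn N"
proof -
  obtain m where "f \<in> \<F>m m" using assms Union_Fm by blast
  moreover obtain Ah Bn N where "level_generator m Ah Bn N" using level_generator_exists by blast
  ultimately show thesis by (rule that)
qed

lemma level_generator_A:
  "level_generator m Ah Bn N \<Longrightarrow> f \<in> \<F>m m \<Longrightarrow> A f = endo_apply Ah f"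
  unfolding level_generator_def by blast

lemma A_power_in_Fm: "f \<in> \<F>m m \<Longrightarrow> (A ^^ k) f \<in> \<F>m m"
  by (induction k) (auto intro: A_in_Fm)

lemma A_power_eq:
  assumes "level_generator m Ah Bn N" "f \<in> \<F>m m"
  shows "(A ^^ k) f = endo_apply (Ah ^ k) f"
proof (induction k)
  case (Suc k)
  then show ?case
    using level_generator_A[OF assms(1) A_power_in_Fm[OF assms(2), of k]] by (simp add: endo_apply_times)
qed simp

definition expA :: "real \<Rightarrow> ('b \<Rightarrow>\<^sub>C real) \<Rightarrow> ('b \<Rightarrow>\<^sub>C real)" where
  "expA t f = (\<Sum>k. (t ^ k / fact k) *\<^sub>R (A ^^ k) f)"

lemma expA_sums_endo:
  assumes "level_generator m Ah Bn N" "f \<in> \<F>m m"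
  shows "(\<lambda>k. (t ^ k / fact k) *\<^sub>R (A ^^ k) f) sums endo_apply (exp (t *\<^sub>R Ah)) f"
proof -
  have "(\<lambda>k. endo_apply ((t *\<^sub>R Ah) ^ k /\<^sub>R fact k) f) sums endo_apply (exp (t *\<^sub>R Ah)) f"
    by (rule bounded_linear.sums[OF bounded_linear_endo_apply_left exp_converges])
  then show ?thesis
    using A_power_eq[OF assms]
    by (simp add: endo_apply_scaleR scaleR_power divide_inverse mult.commute)
qed

lemma expA_eq_endo:
  "level_generator m Ah Bn N \<Longrightarrow> f \<in> \<F>m m \<Longrightarrow> expA t f = endo_apply (exp (t *\<^sub>R Ah)) f"
  unfolding expA_def by (rule sums_unique[symmetric], rule expA_sums_endo)

lemma expA_in_Fm:
  assumes "f \<in> \<F>m m"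
  shows "expA t f \<in> \<F>m m"
proof -
  obtain Ah Bn N where gen: "level_generator m Ah Bn N" using level_generator_exists by blast
  have "(\<lambda>n. \<Sum>k<n. (t ^ k / fact k) *\<^sub>R (A ^^ k) f) \<longlonglongrightarrow> expA t f"
    using expA_sums_endo[OF gen assms] expA_eq_endo[OF gen assms] unfolding sums_def by simp
  moreover have "(\<Sum>k<n. (t ^ k / fact k) *\<^sub>R (A ^^ k) f) \<in> \<F>m m" for n
    using A_power_in_Fm[OF assms] by (intro subspace_sum[OF Fm_subspace] subspace_scale[OF Fm_subspace])
  ultimately show ?thesis
    by (intro Lim_in_closed_set[OF closed_Fm _ sequentially_bot]) auto
qed

lemma expA_in_F: "f \<in> \<F> \<Longrightarrow> expA t f \<in> \<F>"
  using Union_Fm expA_in_Fm by blast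

lemma expA_add_scaled:
  assumes "f \<in> \<F>" "g \<in> \<F>"
  shows "expA t (f + c *\<^sub>R g) = expA t f + c *\<^sub>R expA t g"
proof -
  obtain m where fg: "f \<in> \<F>m m" "g \<in> \<F>m m" using F_in_common_level[OF assms] .
  obtain Ah Bn N where gen: "level_generator m Ah Bn N" using level_generator_exists by blast
  have "f + c *\<^sub>R g \<in> \<F>m m" using fg by (intro subspace_add[OF Fm_subspace] subspace_scale[OF Fm_subspace])
  then show ?thesis
    using expA_eq_endo[OF gen] fg by (simp add: endo_apply_add_right endo_apply_scaleR_right)
qed

lemma expA_diff: "f \<in> \<F> \<Longrightarrow> g \<in> \<F> \<Longrightarrow> expA t (f - g) = expA t f - expA t g"
  using expA_add_scaled[of f g t "-1"] by simp

lemma expA_0: "f \<in> \<F> \<Longrightarrow> expA 0 f = f"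
  by (erule F_level_generator) (simp add: expA_eq_endo)

lemma expA_add: "f \<in> \<F> \<Longrightarrow> expA (s + t) f = expA s (expA t f)"
proof (erule F_level_generator)
  fix m Ah Bn N assume f: "f \<in> \<F>m m" and gen: "level_generator m Ah Bn N"
  show ?thesis
    using expA_eq_endo[OF gen f] expA_eq_endo[OF gen expA_in_Fm[OF f]]
    by (simp add: exp_scaleR_add_left endo_apply_times)
qed

lemma A_zero: "A 0 = 0"
proof -
  obtain Ah Bn N where "level_generator 0 Ah Bn N" using level_generator_exists by blast
  then show ?thesis
    using level_generator_A subspace_0[OF Fm_subspace]
      linear_0[OF bounded_linear.linear[OF bounded_linear_endo_apply]] by metis
qed

lemma expA_one: "expA t (const_bcontfun 1) = const_bcontfun 1"
proof -
  have "(A ^^ Suc k) (const_bcontfun 1) = 0" for k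
    by (induction k) (simp_all add: A_one A_zero)
  then have "(\<lambda>k. (t ^ k / fact k) *\<^sub>R (A ^^ k) (const_bcontfun 1))
      = (\<lambda>k. if k = 0 then const_bcontfun 1 else 0)"
    by (intro ext, case_tac k) (simp_all del: funpow.simps)
  then show ?thesis
    unfolding expA_def using sums_single[of 0 "\<lambda>_. const_bcontfun 1 :: 'b \<Rightarrow>\<^sub>C real"]
    by (simp add: sums_iff)
qed

lemma continuous_on_expA: "f \<in> \<F> \<Longrightarrow> continuous_on UNIV (\<lambda>s. expA s f)"
proof (erule F_level_generator)
  fix m Ah Bn N assume f: "f \<in> \<F>m m" and gen: "level_generator m Ah Bn N"
  show ?thesis
    unfolding expA_eq_endo[OF gen f]
    by (intro bounded_linear.continuous_on[OF bounded_linear_endo_apply_left]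
        continuous_on_vector_derivative) (rule exp_scaleR_has_vector_derivative_right)
qed

lemma expA_has_vector_derivative:
  assumes "f \<in> \<F>"
  shows "((\<lambda>s. expA s f) has_vector_derivative expA s (A f)) (at s within X)"
proof (rule F_level_generator[OF assms])
  fix m Ah Bn N assume f: "f \<in> \<F>m m" and gen: "level_generator m Ah Bn N"
  have "((\<lambda>s. endo_apply (exp (s *\<^sub>R Ah)) f) has_vector_derivative
      endo_apply (exp (s *\<^sub>R Ah) * Ah) f) (at s within X)"
    by (rule bounded_linear.has_vector_derivative[OF bounded_linear_endo_apply_left
          exp_scaleR_has_vector_derivative_right])
  moreover have "endo_apply (exp (s *\<^sub>R Ah) * Ah) f = expA s (A f)"
    using expA_eq_endo[OF gen A_in_Fm[OF f]] level_generator_A[OF gen f] by (simp add: endo_apply_times)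
  ultimately show ?thesis using expA_eq_endo[OF gen f] by simp
qed

lemma A_expA: "f \<in> \<F> \<Longrightarrow> A (expA s f) = expA s (A f)"
proof (erule F_level_generator)
  fix m Ah Bn N assume f: "f \<in> \<F>m m" and gen: "level_generator m Ah Bn N"
  have "A (expA s f) = endo_apply (Ah * exp (s *\<^sub>R Ah)) f"
    using level_generator_A[OF gen expA_in_Fm[OF f]] expA_eq_endo[OF gen f]
    by (simp add: endo_apply_times)
  also have "\<dots> = endo_apply (exp (s *\<^sub>R Ah)) (endo_apply Ah f)"
    by (simp add: exp_times_scaleR_commute[symmetric] endo_apply_times)
  also have "\<dots> = expA s (A f)"
    using expA_eq_endo[OF gen A_in_Fm[OF f]] level_generator_A[OF gen f] by simp
  finally show ?thesis .
qed

lemma T_power_proj_eq: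
  assumes gen: "level_generator m Ah Bn N" and n: "N \<le> n" and f: "f \<in> \<F>m m"
  shows "(T n ^^ k) (\<pi> n f) = \<pi> n (endo_apply ((1 + \<epsilon> n *\<^sub>R Bn n) ^ k) f)
    \<and> endo_apply ((1 + \<epsilon> n *\<^sub>R Bn n) ^ k) f \<in> \<F>m m"
proof (induction k)
  case (Suc k)
  define y where "y = endo_apply ((1 + \<epsilon> n *\<^sub>R Bn n) ^ k) f"
  have IH: "(T n ^^ k) (\<pi> n f) = \<pi> n y" "y \<in> \<F>m m" using Suc unfolding y_def by auto
  have By: "endo_apply (Bn n) y \<in> \<F>m m" "\<pi> n (endo_apply (Bn n) y) = D n y"
    using gen n IH(2) unfolding level_generator_def by auto
  have step: "endo_apply ((1 + \<epsilon> n *\<^sub>R Bn n) ^ Suc k) f = y + \<epsilon> n *\<^sub>R endo_apply (Bn n) y"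
    unfolding y_def by (simp add: endo_apply_times endo_apply_add endo_apply_scaleR)
  have "\<pi> n (y + \<epsilon> n *\<^sub>R endo_apply (Bn n) y) = T n (\<pi> n y)"
    unfolding proj_add_scaled By(2) using \<epsilon>_pos[of n] by (simp add: field_simps)
  then show ?case
    unfolding step using IH By(1) by (auto intro: subspace_add[OF Fm_subspace] subspace_scale[OF Fm_subspace])
qed (use f in simp)

lemma T_power_approx_expA:
  assumes f: "f \<in> \<F>" and e: "e > 0"
  shows "\<exists>N. \<forall>n\<ge>N. \<forall>t\<in>{0..R}. \<forall>la\<in>L n.
           \<bar>(T n ^^ nat \<lfloor>t / \<epsilon> n\<rfloor>) (\<pi> n f) la - \<pi> n (expA t f) la\<bar> < e"
proof (rule F_level_generator[OF f])
  fix m Ah Bn N assume f: "f \<in> \<F>m m" and gen: "level_generator m Ah Bn N"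
  define e' where "e' = e / (norm f + 1)"
  have e': "e' > 0" unfolding e'_def by (intro divide_pos_pos e add_nonneg_pos) auto
  have "Bn \<longlonglongrightarrow> Ah" using gen unfolding level_generator_def by blast
  then obtain N1 where N1: "\<forall>n\<ge>N1. \<forall>t\<in>{0..R}.
      norm ((1 + \<epsilon> n *\<^sub>R Bn n) ^ nat \<lfloor>t / \<epsilon> n\<rfloor> - exp (t *\<^sub>R Ah)) < e'"
    using euler_power_tendsto_exp_uniformly[OF _ \<epsilon>_tendsto \<epsilon>_pos e'] by blast
  have "\<bar>(T n ^^ nat \<lfloor>t / \<epsilon> n\<rfloor>) (\<pi> n f) la - \<pi> n (expA t f) la\<bar> < e"
    if n: "max N N1 \<le> n" and t: "t \<in> {0..R}" for n t la
  proof -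
    define X where "X = (1 + \<epsilon> n *\<^sub>R Bn n) ^ nat \<lfloor>t / \<epsilon> n\<rfloor> - exp (t *\<^sub>R Ah)"
    have "(T n ^^ nat \<lfloor>t / \<epsilon> n\<rfloor>) (\<pi> n f) la - \<pi> n (expA t f) la = \<pi> n (endo_apply X f) la"
      using T_power_proj_eq[OF gen _ f, of n] n expA_eq_endo[OF gen f]
      unfolding X_def by (simp add: endo_apply_diff proj_diff)
    also have "\<bar>\<dots>\<bar> \<le> norm (endo_apply X f)" by (rule abs_proj_le)
    also have "\<dots> \<le> norm X * norm f" by (rule norm_endo_apply_le)
    also have "\<dots> \<le> e' * norm f"
      using N1 n t unfolding X_def by (intro mult_right_mono) (auto intro: less_imp_le)
    also have "\<dots> < e' * (norm f + 1)" using e' by (intro mult_strict_left_mono) auto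
    also have "\<dots> = e" unfolding e'_def using add_nonneg_pos[OF norm_ge_zero[of f] zero_less_one] by simp
    finally show ?thesis .
  qed
  then show ?thesis by blast
qed

lemma norm_expA_le: "f \<in> \<F> \<Longrightarrow> 0 \<le> t \<Longrightarrow> norm (expA t f) \<le> norm f"
proof (rule norm_le_of_eventually_le_on_levels)
  fix \<delta> :: real assume f: "f \<in> \<F>" and t: "0 \<le> t" and \<delta>: "\<delta> > 0"
  obtain N where N: "\<forall>n\<ge>N. \<forall>t'\<in>{0..t}. \<forall>la\<in>L n.
      \<bar>(T n ^^ nat \<lfloor>t' / \<epsilon> n\<rfloor>) (\<pi> n f) la - \<pi> n (expA t' f) la\<bar> < \<delta>"
    using T_power_approx_expA[OF f \<delta>] by blast
  have "\<bar>apply_bcontfun (expA t f) (\<iota> n la)\<bar> \<le> norm f + \<delta>" if "N \<le> n" "la \<in> L n" for n la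
  proof -
    have "\<bar>(T n ^^ nat \<lfloor>t / \<epsilon> n\<rfloor>) (\<pi> n f) la\<bar> \<le> norm f"
      using abs_T_power_le[of n "\<pi> n f" "norm f"] abs_proj_le that(2) by blast
    moreover have "\<bar>(T n ^^ nat \<lfloor>t / \<epsilon> n\<rfloor>) (\<pi> n f) la - \<pi> n (expA t f) la\<bar> < \<delta>"
      using N that t by simp
    ultimately show ?thesis using proj_apply[OF that(2), of "expA t f"] by linarith
  qed
  then show "\<forall>\<^sub>F n in sequentially. \<forall>la\<in>L n. \<bar>apply_bcontfun (expA t f) (\<iota> n la)\<bar> \<le> norm f + \<delta>"
    unfolding eventually_sequentially by blast
qed

lemma expA_nonneg:
  assumes f: "f \<in> \<F>" and t: "0 \<le> t" and "\<forall>x. 0 \<le> apply_bcontfun f x"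
  shows "0 \<le> apply_bcontfun (expA t f) x"
proof (rule nonneg_of_eventually_ge_on_levels)
  fix \<delta> :: real assume \<delta>: "\<delta> > 0"
  obtain N where N: "\<forall>n\<ge>N. \<forall>t'\<in>{0..t}. \<forall>la\<in>L n.
      \<bar>(T n ^^ nat \<lfloor>t' / \<epsilon> n\<rfloor>) (\<pi> n f) la - \<pi> n (expA t' f) la\<bar> < \<delta>"
    using T_power_approx_expA[OF f \<delta>] by blast
  have "- \<delta> \<le> apply_bcontfun (expA t f) (\<iota> n la)" if "N \<le> n" "la \<in> L n" for n la
  proof -
    have "\<forall>la\<in>L n. 0 \<le> \<pi> n f la" using assms(3) by (simp add: proj_apply)
    then have "0 \<le> (T n ^^ nat \<lfloor>t / \<epsilon> n\<rfloor>) (\<pi> n f) la" using T_power_nonneg that(2) by blast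
    moreover have "\<bar>(T n ^^ nat \<lfloor>t / \<epsilon> n\<rfloor>) (\<pi> n f) la - \<pi> n (expA t f) la\<bar> < \<delta>"
      using N that t by simp
    ultimately show ?thesis using proj_apply[OF that(2), of "expA t f"] by linarith
  qed
  then show "\<forall>\<^sub>F n in sequentially. \<forall>la\<in>L n. - \<delta> \<le> apply_bcontfun (expA t f) (\<iota> n la)"
    unfolding eventually_sequentially by blast
qed

end

section \<open>Extension to a conservative Markov semigroup on \<open>C(X)\<close>\<close>

context approximation_scheme
begin

lemma mem_closed_if_F_subset: "closed C \<Longrightarrow> \<F> \<subseteq> C \<Longrightarrow> x \<in> C"
  using closure_minimal[of \<F> C] F_dense by auto

lemma continuous_eq_if_eq_on_F:
  fixes g h :: "('b \<Rightarrow>\<^sub>C real) \<Rightarrow> ('b \<Rightarrow>\<^sub>C real)"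
  assumes "continuous_on UNIV g" "continuous_on UNIV h" "\<And>f. f \<in> \<F> \<Longrightarrow> g f = h f"
  shows "g x = h x"
  using mem_closed_if_F_subset[OF closed_Collect_eq[OF assms(1,2)]] assms(3) by blast

lemma uniformly_continuous_on_expA: "0 \<le> t \<Longrightarrow> uniformly_continuous_on \<F> (expA t)"
  unfolding uniformly_continuous_on_def
proof (intro allI impI)
  fix e :: real assume t: "0 \<le> t" and e: "e > 0"
  have "dist (expA t x') (expA t x) < e" if "x \<in> \<F>" "x' \<in> \<F>" "dist x' x < e" for x x'
  proof -
    have "dist (expA t x') (expA t x) = norm (expA t (x' - x))"
      using expA_diff[OF that(2,1)] by (simp add: dist_norm)
    also have "\<dots> \<le> norm (x' - x)"
      using norm_expA_le[OF _ t] that subspace_diff[OF F_subspace] by blast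
    finally show ?thesis using that(3) by (simp add: dist_norm)
  qed
  with e show "\<exists>d>0. \<forall>x\<in>\<F>. \<forall>x'\<in>\<F>. dist x' x < d \<longrightarrow> dist (expA t x') (expA t x) < e" by blast
qed

lemma expA_extension_exists: "0 \<le> t \<Longrightarrow> \<exists>h. continuous_on UNIV h \<and> (\<forall>f\<in>\<F>. h f = expA t f)"
proof -
  assume t: "0 \<le> t"
  obtain g where "uniformly_continuous_on (closure \<F>) g" "\<And>x. x \<in> \<F> \<Longrightarrow> expA t x = g x"
    using uniformly_continuous_on_extension_on_closure[OF uniformly_continuous_on_expA[OF t]] by metis
  then show ?thesis
    using F_dense by (intro exI[of _ g]) (auto intro: uniformly_continuous_imp_continuous)
qed

text \<open>For \<open>t < 0\<close> the value is irrelevant; the identity keeps \<open>S\<close> total.\<close>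

definition S :: "real \<Rightarrow> ('b \<Rightarrow>\<^sub>C real) \<Rightarrow> ('b \<Rightarrow>\<^sub>C real)" where
  "S t = (if 0 \<le> t then (SOME h. continuous_on UNIV h \<and> (\<forall>f\<in>\<F>. h f = expA t f)) else id)"

lemma continuous_on_S: "0 \<le> t \<Longrightarrow> continuous_on UNIV (S t)"
  and S_eq_expA: "0 \<le> t \<Longrightarrow> f \<in> \<F> \<Longrightarrow> S t f = expA t f"
  unfolding S_def using someI_ex[OF expA_extension_exists] by simp_all

lemma S_eq_if_eq_on_F:
  fixes g :: "('b \<Rightarrow>\<^sub>C real) \<Rightarrow> ('b \<Rightarrow>\<^sub>C real)"
  assumes "0 \<le> t" "continuous_on UNIV g" "\<And>f. f \<in> \<F> \<Longrightarrow> expA t f = g f"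
  shows "S t x = g x"
  using continuous_eq_if_eq_on_F[OF continuous_on_S assms(2)] assms(1,3) S_eq_expA by auto

lemma S_add: "0 \<le> t \<Longrightarrow> S t (f + g) = S t f + S t g"
proof -
  assume t: "0 \<le> t"
  have cont_left: "continuous_on UNIV (\<lambda>f. S t (f + g))" for g
    by (rule continuous_on_compose2[OF continuous_on_S[OF t]]) (auto intro: continuous_intros)
  have cont_right: "continuous_on UNIV (\<lambda>f. S t f + S t g)" for g
    using continuous_on_S[OF t] by (auto intro: continuous_intros)
  have cont_left': "continuous_on UNIV (\<lambda>g. S t (f + g))" for f
    by (rule continuous_on_compose2[OF continuous_on_S[OF t]]) (auto intro: continuous_intros)
  have cont_right': "continuous_on UNIV (\<lambda>g. S t f + S t g)" for f
    using continuous_on_S[OF t] by (auto intro: continuous_intros)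
  have on_F: "S t (f + g) = S t f + S t g" if g: "g \<in> \<F>" for f g
  proof (rule continuous_eq_if_eq_on_F[OF cont_left cont_right])
    fix f assume f: "f \<in> \<F>"
    then show "S t (f + g) = S t f + S t g"
      using S_eq_expA[OF t] expA_add_scaled[OF f g, of t 1] g subspace_add[OF F_subspace f g] by simp
  qed
  show ?thesis by (rule continuous_eq_if_eq_on_F[OF cont_left' cont_right' on_F])
qed

lemma S_scaleR: "0 \<le> t \<Longrightarrow> S t (c *\<^sub>R f) = c *\<^sub>R S t f"
proof -
  assume t: "0 \<le> t"
  have expA_0_fun: "expA t 0 = 0"
    using expA_add_scaled[OF subspace_0[OF F_subspace] subspace_0[OF F_subspace], of t 1] by simp
  show ?thesis
  proof (rule continuous_eq_if_eq_on_F[where g = "\<lambda>f. S t (c *\<^sub>R f)" and h = "\<lambda>f. c *\<^sub>R S t f"])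
    show "continuous_on UNIV (\<lambda>f. S t (c *\<^sub>R f))"
      by (rule continuous_on_compose2[OF continuous_on_S[OF t]]) (auto intro: continuous_intros)
    show "continuous_on UNIV (\<lambda>f. c *\<^sub>R S t f)" using continuous_on_S[OF t] by (auto intro: continuous_intros)
    fix f assume f: "f \<in> \<F>"
    then show "S t (c *\<^sub>R f) = c *\<^sub>R S t f"
      using S_eq_expA[OF t] expA_add_scaled[OF subspace_0[OF F_subspace] f, of t c] expA_0_fun
        subspace_scale[OF F_subspace f] by simp
  qed
qed

lemma S_diff: "0 \<le> t \<Longrightarrow> S t (f - g) = S t f - S t g"
  using S_add[of t f "- g"] S_scaleR[of t "-1" g] by simp

lemma norm_S_le: "0 \<le> t \<Longrightarrow> norm (S t f) \<le> norm f"
proof -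
  assume t: "0 \<le> t"
  have "closed {f. norm (S t f) \<le> norm f}"
    by (rule closed_Collect_le) (auto intro: continuous_on_norm continuous_on_id continuous_on_S[OF t])
  moreover have "\<F> \<subseteq> {f. norm (S t f) \<le> norm f}" using S_eq_expA[OF t] norm_expA_le[OF _ t] by auto
  ultimately show ?thesis using mem_closed_if_F_subset by blast
qed

lemma bounded_linear_S: "0 \<le> t \<Longrightarrow> bounded_linear (S t)"
  by (rule bounded_linear_intro[where K = 1]) (auto simp: S_add S_scaleR norm_S_le)

lemma S_0: "S 0 f = f"
  by (rule S_eq_if_eq_on_F) (auto simp: expA_0 continuous_on_id)

lemma S_add_time: "0 \<le> s \<Longrightarrow> 0 \<le> t \<Longrightarrow> S (s + t) f = S s (S t f)"
proof (rule S_eq_if_eq_on_F)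
  assume s: "0 \<le> s" and t: "0 \<le> t"
  show "0 \<le> s + t" using s t by simp
  show "continuous_on UNIV (\<lambda>f. S s (S t f))"
    by (rule continuous_on_compose2[OF continuous_on_S[OF s] continuous_on_S[OF t]]) simp
  show "expA (s + t) f = S s (S t f)" if "f \<in> \<F>" for f
    using that S_eq_expA[OF t that] S_eq_expA[OF s expA_in_F[OF that]] expA_add by simp
qed

lemma S_one: "0 \<le> t \<Longrightarrow> S t (const_bcontfun 1) = const_bcontfun 1"
  using S_eq_expA[OF _ one_in_F] expA_one by simp

text \<open>Positivity passes to the limit through the approximants \<open>u\<^sub>j + \<parallel>u\<^sub>j - f\<parallel>\<close>, which are
  nonnegative elements of \<open>\<F>\<close> when \<open>f \<ge> 0\<close>.\<close>

lemma S_nonneg: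
  assumes t: "0 \<le> t" and f: "\<forall>x. 0 \<le> apply_bcontfun f x"
  shows "0 \<le> apply_bcontfun (S t f) x"
proof -
  obtain u where u: "\<And>j. u j \<in> \<F>" "u \<longlonglongrightarrow> f" using F_dense closure_sequential by blast
  define y where "y = (\<lambda>j. u j + norm (u j - f) *\<^sub>R const_bcontfun 1)"
  have y: "y j \<in> \<F>" for j
    unfolding y_def using u(1) one_in_F by (intro subspace_add[OF F_subspace] subspace_scale[OF F_subspace])
  have y_nonneg: "0 \<le> apply_bcontfun (y j) z" for j z
    using norm_bounded[of "u j - f" z] f[rule_format, of z] by (simp add: y_def)
  have "(\<lambda>j. norm (u j - f) *\<^sub>R const_bcontfun 1) \<longlonglongrightarrow> 0 *\<^sub>R (const_bcontfun 1 :: 'b \<Rightarrow>\<^sub>C real)"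
    using u(2) by (intro tendsto_scaleR tendsto_const tendsto_norm_zero LIM_zero)
  then have y_tendsto: "y \<longlonglongrightarrow> f" unfolding y_def using tendsto_add[OF u(2)] by fastforce
  have "isCont (S t) f"
    using continuous_on_S[OF t] continuous_on_eq_continuous_at[of UNIV] by auto
  then have "(\<lambda>j. S t (y j)) \<longlonglongrightarrow> S t f"
    using y_tendsto by (rule isCont_tendsto_compose)
  then have "(\<lambda>j. apply_bcontfun (S t (y j)) x) \<longlonglongrightarrow> apply_bcontfun (S t f) x"
    by (rule bounded_linear.tendsto[OF bounded_linear_apply_bcontfun])
  then show ?thesis
    by (rule LIMSEQ_le_const) (use S_eq_expA[OF t y] expA_nonneg[OF y t] y_nonneg in auto)
qed

lemma continuous_on_S_orbit: "continuous_on {0..} (\<lambda>t. S t f)"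
  unfolding continuous_on_iff
proof (intro ballI allI impI)
  fix t0 :: real and e :: real assume t0: "t0 \<in> {0..}" and e: "0 < e"
  have "\<forall>\<delta>>0. \<exists>y\<in>\<F>. dist y f < \<delta>" using F_dense closure_approachable by blast
  then obtain u where u: "u \<in> \<F>" "dist u f < e / 3" using e by (meson divide_pos_pos zero_less_numeral)
  have "\<forall>\<delta>>0. \<exists>d>0. \<forall>s\<in>UNIV. dist s t0 < d \<longrightarrow> dist (expA s u) (expA t0 u) < \<delta>"
    using continuous_on_expA[OF u(1)] unfolding continuous_on_iff by blast
  then obtain d where d: "d > 0" "\<forall>s. dist s t0 < d \<longrightarrow> dist (expA s u) (expA t0 u) < e / 3"
    using e by (meson UNIV_I divide_pos_pos zero_less_numeral)
  have "dist (S t f) (S t0 f) < e" if t: "t \<in> {0..}" "dist t t0 < d" for t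
  proof -
    have "dist (S t f) (S t u) \<le> dist f u"
      using norm_S_le[of t "f - u"] S_diff[of t f u] t by (simp add: dist_norm)
    moreover have "dist (S t0 u) (S t0 f) \<le> dist u f"
      using norm_S_le[of t0 "u - f"] S_diff[of t0 u f] t0 by (simp add: dist_norm)
    moreover have "dist (S t u) (S t0 u) < e / 3"
      using d(2) t t0 S_eq_expA[OF _ u(1)] by simp
    moreover have "dist (S t f) (S t0 f) \<le> dist (S t f) (S t u) + dist (S t u) (S t0 u) + dist (S t0 u) (S t0 f)"
      using dist_triangle[of "S t f" "S t0 f" "S t u"] dist_triangle[of "S t u" "S t0 f" "S t0 u"] by linarith
    ultimately show ?thesis using u(2) by (simp add: dist_commute)
  qed
  then show "\<exists>d>0. \<forall>t\<in>{0..}. dist t t0 < d \<longrightarrow> dist (S t f) (S t0 f) < e" using d(1) by blast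
qed

lemma conservative_markov_semigroup_S: "conservative_markov_semigroup S"
  unfolding conservative_markov_semigroup_def
proof (intro conjI)
  show "\<forall>t\<ge>0. bounded_linear (S t)" using bounded_linear_S by blast
  show "\<forall>f. S 0 f = f" using S_0 by blast
  show "\<forall>s\<ge>0. \<forall>t\<ge>0. \<forall>f. S (s + t) f = S s (S t f)" using S_add_time by blast
  show "\<forall>f. continuous_on {0..} (\<lambda>t. S t f)" using continuous_on_S_orbit by blast
  show "\<forall>t\<ge>0. \<forall>f. norm (S t f) \<le> norm f" using norm_S_le by blast
  show "\<forall>t\<ge>0. \<forall>f. (\<forall>x. 0 \<le> apply_bcontfun f x) \<longrightarrow> (\<forall>x. 0 \<le> apply_bcontfun (S t f) x)"
    using S_nonneg by blast
  show "\<forall>t\<ge>0. S t (const_bcontfun 1) = const_bcontfun 1" using S_one by blast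
qed

end

section \<open>The generator of the semigroup is the closure of \<open>A\<close>\<close>

lemma norm_has_integral_le:
  fixes u :: "real \<Rightarrow> 'a::real_normed_vector"
  assumes "(u has_integral I) {0..t}" "0 \<le> t" "0 \<le> B" "\<And>s. s \<in> {0..t} \<Longrightarrow> norm (u s) \<le> B"
  shows "norm I \<le> B * t"
  using has_integral_bound[of B u I 0 t] assms by (simp add: cbox_interval content_real)

lemma average_integral_tendsto:
  fixes u :: "real \<Rightarrow> 'a::banach"
  assumes u: "continuous_on {0..} u"
  shows "((\<lambda>h. (1 / h) *\<^sub>R integral {0..h} u) \<longlongrightarrow> u 0) (at_right 0)"
  unfolding tendsto_iff
proof (intro allI impI)
  fix e :: real assume e: "e > 0"
  have "\<forall>\<epsilon>>0. \<exists>\<delta>>0. \<forall>s\<in>{0..}. dist s 0 < \<delta> \<longrightarrow> dist (u s) (u 0) < \<epsilon>"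
    using u unfolding continuous_on_iff by (rule bspec) simp
  then obtain \<delta> where \<delta>: "\<delta> > 0" "\<forall>s\<in>{0..}. dist s 0 < \<delta> \<longrightarrow> dist (u s) (u 0) < e / 2"
    using half_gt_zero[OF e] by blast
  have "dist ((1 / h) *\<^sub>R integral {0..h} u) (u 0) < e" if h: "0 < h" "h < \<delta>" for h
  proof -
    have "(u has_integral integral {0..h} u) {0..h}"
      using integrable_continuous_real[OF continuous_on_subset[OF u]] by (auto simp: has_integral_integral)
    moreover have "((\<lambda>s. u 0) has_integral h *\<^sub>R u 0) {0..h}"
      using has_integral_const_real[of "u 0" 0 h] h by simp
    ultimately have "((\<lambda>s. u s - u 0) has_integral (integral {0..h} u - h *\<^sub>R u 0)) {0..h}"
      by (rule has_integral_diff)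
    then have "norm (integral {0..h} u - h *\<^sub>R u 0) \<le> e / 2 * h"
    proof (rule norm_has_integral_le)
      fix s assume "s \<in> {0..h}"
      then have "dist (u s) (u 0) < e / 2" using \<delta>(2) h by auto
      then show "norm (u s - u 0) \<le> e / 2" by (simp add: dist_norm)
    qed (use h e in auto)
    moreover have "(1 / h) *\<^sub>R integral {0..h} u - u 0 = (1 / h) *\<^sub>R (integral {0..h} u - h *\<^sub>R u 0)"
      using h by (simp add: scaleR_diff_right)
    then have "dist ((1 / h) *\<^sub>R integral {0..h} u) (u 0) = norm (integral {0..h} u - h *\<^sub>R u 0) / h"
      using h by (simp add: dist_norm)
    moreover have "0 < e * h" using h e by simp
    ultimately show ?thesis using h by (simp add: divide_less_eq)
  qed
  then show "\<forall>\<^sub>F h in at_right 0. dist ((1 / h) *\<^sub>R integral {0..h} u) (u 0) < e"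
    unfolding eventually_at_right[OF \<delta>(1)] using \<delta>(1) by blast
qed

context approximation_scheme
begin

abbreviation "graph_A \<equiv> {(f, A f) | f. f \<in> \<F>}"

lemma S_orbit_integrable: "(\<lambda>s. S s g) integrable_on {0..t}"
  by (rule integrable_continuous_real, rule continuous_on_subset[OF continuous_on_S_orbit]) auto

lemma norm_integral_S_le: "0 \<le> t \<Longrightarrow> norm (integral {0..t} (\<lambda>s. S s g)) \<le> norm g * t"
  by (rule norm_has_integral_le[OF integrable_integral[OF S_orbit_integrable]]) (auto simp: norm_S_le)

lemma integral_S_diff:
  "integral {0..t} (\<lambda>s. S s g) - integral {0..t} (\<lambda>s. S s h) = integral {0..t} (\<lambda>s. S s (g - h))"
proof -
  have "integral {0..t} (\<lambda>s. S s g) - integral {0..t} (\<lambda>s. S s h) = integral {0..t} (\<lambda>s. S s g - S s h)"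
    by (rule integral_diff[OF S_orbit_integrable S_orbit_integrable, symmetric])
  also have "\<dots> = integral {0..t} (\<lambda>s. S s (g - h))" by (rule integral_cong) (simp add: S_diff)
  finally show ?thesis .
qed

lemma A_scaleR: "f \<in> \<F> \<Longrightarrow> A (c *\<^sub>R f) = c *\<^sub>R A f"
proof (erule F_level_generator)
  fix m Ah Bn N assume f: "f \<in> \<F>m m" and gen: "level_generator m Ah Bn N"
  show ?thesis
    using level_generator_A[OF gen] f subspace_scale[OF Fm_subspace f]
    by (simp add: endo_apply_scaleR_right)
qed

lemma S_minus_id_has_integral:
  assumes f: "f \<in> \<F>" and t: "0 \<le> t"
  shows "((\<lambda>s. S s (A f)) has_integral (S t f - f)) {0..t}"
proof -
  have "((\<lambda>s. expA s (A f)) has_integral (expA t f - expA 0 f)) {0..t}"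
    by (rule fundamental_theorem_of_calculus[OF t]) (rule expA_has_vector_derivative[OF f])
  then show ?thesis
    using expA_0[OF f] S_eq_expA[OF t f] S_eq_expA[OF _ A_in_F[OF f]]
    by (subst has_integral_cong[where g = "\<lambda>s. expA s (A f)"]) auto
qed

text \<open>\<open>\<F>\<close> is a core: time averages of orbits of elements of \<open>\<F>\<close> stay in \<open>\<F>\<close>, where \<open>A\<close>
  acts on them as \<open>S t - 1\<close>.\<close>

lemma integral_S_in_F_and_A:
  assumes f: "f \<in> \<F>" and t: "0 \<le> t"
  shows "integral {0..t} (\<lambda>s. S s f) \<in> \<F> \<and> A (integral {0..t} (\<lambda>s. S s f)) = S t f - f"
proof (rule F_level_generator[OF f])
  fix m Ah Bn N assume fm: "f \<in> \<F>m m" and gen: "level_generator m Ah Bn N"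
  obtain B where B: "finite B" "\<F>m m = span B" using Fm_finite_span by blast
  obtain P where P: "bounded_linear P" "\<And>g. P g \<in> \<F>m m" "\<And>g. g \<in> \<F>m m \<Longrightarrow> P g = g"
    using finite_span_continuous_projection[OF B(1)] B(2) by metis
  define I where "I = integral {0..t} (\<lambda>s. expA s f)"
  have S_I: "integral {0..t} (\<lambda>s. S s f) = I"
    unfolding I_def by (rule integral_cong) (simp add: S_eq_expA f)
  have int: "(\<lambda>s. expA s f) integrable_on {0..t}"
    by (rule integrable_continuous_real, rule continuous_on_subset[OF continuous_on_expA[OF f]]) auto
  have "P I = integral {0..t} (\<lambda>s. P (expA s f))"
    unfolding I_def using integral_linear[OF int P(1)] by (simp add: o_def)
  also have "\<dots> = I" unfolding I_def by (rule integral_cong) (simp add: P(3) expA_in_Fm[OF fm])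
  finally have I: "I \<in> \<F>m m" using P(2) by metis
  have "A I = integral {0..t} (\<lambda>s. endo_apply Ah (expA s f))"
    unfolding level_generator_A[OF gen I] unfolding I_def
    using integral_linear[OF int bounded_linear_endo_apply] by (simp add: o_def)
  also have "\<dots> = integral {0..t} (\<lambda>s. S s (A f))"
    using level_generator_A[OF gen expA_in_Fm[OF fm]] A_expA[OF f] S_eq_expA[OF _ A_in_F[OF f]]
    by (intro integral_cong) auto
  also have "\<dots> = S t f - f" by (rule integral_unique[OF S_minus_id_has_integral[OF f t]])
  finally show ?thesis using S_I Fm_subset_F[OF I] by simp
qed

lemma closure_graph_A_subset_generator: "closure graph_A \<subseteq> generator_graph S"
proof
  fix z assume "z \<in> closure graph_A"
  then obtain zs where zs: "\<And>j. zs j \<in> graph_A" "zs \<longlonglongrightarrow> z" unfolding closure_sequential by blast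
  obtain f g where z: "z = (f, g)" by (cases z)
  define x where "x = (\<lambda>j. fst (zs j))"
  have "x j \<in> \<F> \<and> zs j = (x j, A (x j))" for j using zs(1)[of j] unfolding x_def by auto
  then have x: "\<And>j. x j \<in> \<F>" and zs_eq: "\<And>j. zs j = (x j, A (x j))" by auto
  have x_tendsto: "x \<longlonglongrightarrow> f" and Ax_tendsto: "(\<lambda>j. A (x j)) \<longlonglongrightarrow> g"
    using tendsto_fst[OF zs(2)] tendsto_snd[OF zs(2)] by (simp_all add: z zs_eq)
  have integral_eq: "S t f - f = integral {0..t} (\<lambda>s. S s g)" if t: "0 \<le> t" for t
  proof -
    have "isCont (S t) f" using continuous_on_S[OF t] continuous_on_eq_continuous_at[of UNIV] by auto
    then have "(\<lambda>j. S t (x j) - x j) \<longlonglongrightarrow> S t f - f"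
      by (intro tendsto_diff isCont_tendsto_compose[OF _ x_tendsto] x_tendsto)
    moreover have "(\<lambda>j. integral {0..t} (\<lambda>s. S s (A (x j)))) \<longlonglongrightarrow> integral {0..t} (\<lambda>s. S s g)"
    proof (rule LIM_zero_cancel, rule Lim_null_comparison)
      show "\<forall>\<^sub>F j in sequentially. norm (integral {0..t} (\<lambda>s. S s (A (x j))) - integral {0..t} (\<lambda>s. S s g))
          \<le> norm (A (x j) - g) * t"
        by (rule always_eventually) (simp add: integral_S_diff norm_integral_S_le t)
      show "(\<lambda>j. norm (A (x j) - g) * t) \<longlonglongrightarrow> 0"
        using Ax_tendsto by (intro tendsto_mult_left_zero tendsto_norm_zero LIM_zero)
    qed
    moreover have "S t (x j) - x j = integral {0..t} (\<lambda>s. S s (A (x j)))" for j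
      by (rule integral_unique[OF S_minus_id_has_integral[OF x(1) t], symmetric])
    ultimately show ?thesis using LIMSEQ_unique by simp
  qed
  have "((\<lambda>h. (1 / h) *\<^sub>R integral {0..h} (\<lambda>s. S s g)) \<longlongrightarrow> g) (at_right 0)"
    using average_integral_tendsto[OF continuous_on_S_orbit] by (simp add: S_0)
  moreover have "\<forall>\<^sub>F h in at_right 0. (1 / h) *\<^sub>R integral {0..h} (\<lambda>s. S s g) = (1 / h) *\<^sub>R (S h f - f)"
    using eventually_at_right_less[of "0::real"] by (rule eventually_mono) (simp add: integral_eq)
  ultimately have "((\<lambda>h. (1 / h) *\<^sub>R (S h f - f)) \<longlongrightarrow> g) (at_right 0)"
    by (rule Lim_transform_eventually)
  then show "z \<in> generator_graph S" unfolding generator_graph_def z by simp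
qed

lemma average_pair_in_closure_graph_A:
  assumes t: "0 < t"
  shows "((1 / t) *\<^sub>R integral {0..t} (\<lambda>s. S s f), (1 / t) *\<^sub>R (S t f - f)) \<in> closure graph_A"
proof -
  obtain x where x: "\<And>j. x j \<in> \<F>" "x \<longlonglongrightarrow> f" using F_dense closure_sequential by blast
  define y where "y = (\<lambda>j. (1 / t) *\<^sub>R integral {0..t} (\<lambda>s. S s (x j)))"
  have graph: "(y j, (1 / t) *\<^sub>R (S t (x j) - x j)) \<in> graph_A" for j
  proof -
    have I: "integral {0..t} (\<lambda>s. S s (x j)) \<in> \<F>"
      "A (integral {0..t} (\<lambda>s. S s (x j))) = S t (x j) - x j"
      using integral_S_in_F_and_A[OF x(1)[of j]] t by auto
    then have "y j \<in> \<F>" "A (y j) = (1 / t) *\<^sub>R (S t (x j) - x j)"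
      unfolding y_def using subspace_scale[OF F_subspace I(1)] A_scaleR[OF I(1)] by auto
    then show ?thesis by simp
  qed
  have "y \<longlonglongrightarrow> (1 / t) *\<^sub>R integral {0..t} (\<lambda>s. S s f)"
  proof (rule LIM_zero_cancel, rule Lim_null_comparison)
    show "\<forall>\<^sub>F j in sequentially. norm (y j - (1 / t) *\<^sub>R integral {0..t} (\<lambda>s. S s f)) \<le> norm (x j - f)"
    proof (rule always_eventually, intro allI)
      fix j
      have "y j - (1 / t) *\<^sub>R integral {0..t} (\<lambda>s. S s f) = (1 / t) *\<^sub>R integral {0..t} (\<lambda>s. S s (x j - f))"
        unfolding y_def by (simp add: scaleR_diff_right[symmetric] integral_S_diff)
      then show "norm (y j - (1 / t) *\<^sub>R integral {0..t} (\<lambda>s. S s f)) \<le> norm (x j - f)"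
        using norm_integral_S_le[of t "x j - f"] t by (simp add: divide_le_eq mult.commute)
    qed
    show "(\<lambda>j. norm (x j - f)) \<longlonglongrightarrow> 0" using x(2) by (intro tendsto_norm_zero LIM_zero)
  qed
  moreover have "isCont (S t) f" using continuous_on_S[of t] t continuous_on_eq_continuous_at[of UNIV] by auto
  then have "(\<lambda>j. (1 / t) *\<^sub>R (S t (x j) - x j)) \<longlonglongrightarrow> (1 / t) *\<^sub>R (S t f - f)"
    by (intro tendsto_scaleR tendsto_const tendsto_diff isCont_tendsto_compose[OF _ x(2)] x(2))
  ultimately have "(\<lambda>j. (y j, (1 / t) *\<^sub>R (S t (x j) - x j)))
      \<longlonglongrightarrow> ((1 / t) *\<^sub>R integral {0..t} (\<lambda>s. S s f), (1 / t) *\<^sub>R (S t f - f))"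
    by (rule tendsto_Pair)
  then show ?thesis
    unfolding closure_sequential
    by (intro exI[of _ "\<lambda>j. (y j, (1 / t) *\<^sub>R (S t (x j) - x j))"] conjI allI graph)
qed

lemma generator_subset_closure_graph_A: "generator_graph S \<subseteq> closure graph_A"
proof
  fix z assume "z \<in> generator_graph S"
  then obtain f g where z: "z = (f, g)"
    and lim: "((\<lambda>h. (1 / h) *\<^sub>R (S h f - f)) \<longlongrightarrow> g) (at_right 0)"
    unfolding generator_graph_def by auto
  have "((\<lambda>t. ((1 / t) *\<^sub>R integral {0..t} (\<lambda>s. S s f), (1 / t) *\<^sub>R (S t f - f))) \<longlongrightarrow> (S 0 f, g))
      (at_right 0)"
    by (rule tendsto_Pair[OF average_integral_tendsto[OF continuous_on_S_orbit] lim])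
  moreover have "\<forall>\<^sub>F t in at_right 0.
      ((1 / t) *\<^sub>R integral {0..t} (\<lambda>s. S s f), (1 / t) *\<^sub>R (S t f - f)) \<in> closure graph_A"
    using eventually_at_right_less[of "0::real"] by (rule eventually_mono) (rule average_pair_in_closure_graph_A)
  ultimately have "(S 0 f, g) \<in> closure graph_A"
    by (rule Lim_in_closed_set[OF closed_closure _ trivial_limit_at_right_real, rotated])
  then show "z \<in> closure graph_A" unfolding z S_0 .
qed

lemma generator_graph_S: "generator_graph S = closure graph_A"
  using closure_graph_A_subset_generator generator_subset_closure_graph_A by blast

lemma closable_A: "closable \<F> A"
  unfolding closable_def generator_graph_S[symmetric] generator_graph_def
proof (intro allI impI)
  fix f g1 g2
  assume "(f, g1) \<in> {(f, g). ((\<lambda>h. (1 / h) *\<^sub>R (S h f - f)) \<longlongrightarrow> g) (at_right 0)}"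
    and "(f, g2) \<in> {(f, g). ((\<lambda>h. (1 / h) *\<^sub>R (S h f - f)) \<longlongrightarrow> g) (at_right 0)}"
  then show "g1 = g2" by (auto intro: tendsto_unique[OF trivial_limit_at_right_real])
qed

lemma T_power_approx_S:
  assumes e: "e > 0"
  shows "\<exists>N. \<forall>n\<ge>N. \<forall>t\<in>{0..R}. \<forall>la\<in>L n.
           \<bar>(T n ^^ nat \<lfloor>t / \<epsilon> n\<rfloor>) (\<pi> n f) la - \<pi> n (S t f) la\<bar> < e"
proof -
  have e3: "e / 3 > 0" using e by simp
  have "\<forall>\<delta>>0. \<exists>y\<in>\<F>. dist y f < \<delta>" using F_dense closure_approachable by blast
  then obtain u where u: "u \<in> \<F>" "dist u f < e / 3" using e3 by blast
  obtain N where N: "\<forall>n\<ge>N. \<forall>t\<in>{0..R}. \<forall>la\<in>L n.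
      \<bar>(T n ^^ nat \<lfloor>t / \<epsilon> n\<rfloor>) (\<pi> n u) la - \<pi> n (expA t u) la\<bar> < e / 3"
    using T_power_approx_expA[OF u(1) e3] by blast
  have "\<bar>(T n ^^ k) (\<pi> n f) la - \<pi> n (S t f) la\<bar> < e"
    if n: "N \<le> n" and t: "t \<in> {0..R}" and la: "la \<in> L n" and k: "k = nat \<lfloor>t / \<epsilon> n\<rfloor>" for n t la k
  proof -
    have fu: "norm (f - u) < e / 3" using u(2) by (simp add: dist_norm norm_minus_commute)
    have "(T n ^^ k) (\<pi> n (f - u)) la = (T n ^^ k) (\<pi> n f) la - (T n ^^ k) (\<pi> n u) la"
      by (simp add: proj_diff T_power_diff)
    then have 1: "\<bar>(T n ^^ k) (\<pi> n f) la - (T n ^^ k) (\<pi> n u) la\<bar> \<le> norm (f - u)"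
      using abs_T_power_le[of n "\<pi> n (f - u)" "norm (f - u)" k] abs_proj_le la by metis
    have "\<pi> n (S t (u - f)) la = \<pi> n (S t u) la - \<pi> n (S t f) la"
      using t by (simp add: proj_diff S_diff)
    then have 2: "\<bar>\<pi> n (S t u) la - \<pi> n (S t f) la\<bar> \<le> norm (f - u)"
      using abs_proj_le[of n "S t (u - f)" la] norm_S_le[of t "u - f"] t
      by (simp add: norm_minus_commute)
    have 3: "\<bar>(T n ^^ k) (\<pi> n u) la - \<pi> n (S t u) la\<bar> < e / 3"
      using N n t la S_eq_expA[OF _ u(1), of t] k by simp
    show ?thesis using 1 2 3 fu by linarith
  qed
  then show ?thesis by blast
qed

end

theorem proposition1p4:
  fixes lev :: "'l \<Rightarrow> nat"
    and pd :: "'l \<Rightarrow> 'l \<Rightarrow> real"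
    and M :: "'l \<Rightarrow> real"
    and \<iota> :: "nat \<Rightarrow> 'l \<Rightarrow> 'b::topological_space"
    and \<F> :: "('b \<Rightarrow>\<^sub>C real) set"
    and \<F>m :: "nat \<Rightarrow> ('b \<Rightarrow>\<^sub>C real) set"
    and \<epsilon> :: "nat \<Rightarrow> real"
    and A :: "('b \<Rightarrow>\<^sub>C real) \<Rightarrow> ('b \<Rightarrow>\<^sub>C real)"
  assumes kernel: "graded_down_kernel lev pd"
    and coh: "coherent_system lev pd M"
    and Mpos: "\<And>la. M la > 0"
    and inj: "\<And>n. inj_on (\<iota> n) (level_set lev n)"
    and A1: "compact (UNIV :: 'b set)" "metrizable_space (euclidean :: 'b topology)"
            "separable_space (euclidean :: 'b topology)"
    and A2: "\<And>U. open U \<Longrightarrow> U \<noteq> {} \<Longrightarrow>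
               \<exists>N. \<forall>n\<ge>N. U \<inter> \<iota> n ` level_set lev n \<noteq> {}"
    and A3_F: "subspace \<F>" "closure \<F> = UNIV"
    and A3_Fm: "\<And>m. subspace (\<F>m m)" "\<And>m. \<exists>B. finite B \<and> \<F>m m = span B"
               "\<And>m. \<F>m m \<subseteq> \<F>m (Suc m)" "(\<Union>m. \<F>m m) = \<F>"
    and A3_inv: "\<And>m. \<exists>N. \<forall>n\<ge>N. inj_on (proj lev \<iota> n) (\<F>m m) \<and>
                    T_op lev pd M n ` proj lev \<iota> n ` \<F>m m \<subseteq> proj lev \<iota> n ` \<F>m m"
    and A4_eps: "\<And>n. \<epsilon> n > 0" "\<epsilon> \<longlonglongrightarrow> 0"
    and A4: "\<And>m f. f \<in> \<F>m m \<Longrightarrow>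
               \<exists>g. (\<forall>\<^sub>F n in sequentially. g n \<in> \<F>m m \<and>
                      proj lev \<iota> n (g n) =
                        (\<lambda>la. (T_op lev pd M n (proj lev \<iota> n f) la - proj lev \<iota> n f la) / \<epsilon> n))
                    \<and> g \<longlonglongrightarrow> A f"
    and A5: "const_bcontfun 1 \<in> \<F>"
  shows "closable \<F> A \<and>
    (\<exists>S. conservative_markov_semigroup S \<and>
         generator_graph S = closure {(f, A f) | f. f \<in> \<F>} \<and>
         (\<forall>f R e. e > 0 \<longrightarrow>
            (\<exists>N. \<forall>n\<ge>N. \<forall>t\<in>{0..R}. \<forall>la\<in>level_set lev n.
               \<bar>(T_op lev pd M n ^^ nat \<lfloor>t / \<epsilon> n\<rfloor>) (proj lev \<iota> n f) la
                 - proj lev \<iota> n (S t f) la\<bar> < e)))"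
proof -
  have proj_inj: "\<exists>N. \<forall>n\<ge>N. inj_on (proj lev \<iota> n) (\<F>m m)" for m
  proof -
    obtain N where "\<forall>n\<ge>N. inj_on (proj lev \<iota> n) (\<F>m m) \<and>
        T_op lev pd M n ` proj lev \<iota> n ` \<F>m m \<subseteq> proj lev \<iota> n ` \<F>m m"
      using A3_inv[of m] by blast
    then show ?thesis by blast
  qed
  interpret approximation_scheme lev pd M \<iota> \<F> \<F>m \<epsilon> A
    by (intro approximation_scheme.intro up_down_chain.intro approximation_scheme_axioms.intro)
      (fact kernel coh Mpos A2 A3_F A3_Fm proj_inj A4_eps A4 A5)+
  show ?thesis
    using closable_A conservative_markov_semigroup_S generator_graph_S T_power_approx_S by blast
qed

end
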